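(* Let $c>1$ and let $m\ge cn$. Then there exists a constant $d>0$ such that, for all sufficiently large $n$ and every fixed matrix $\mathbf B\in\mathbb{Z}_2^{m\times 2n}$, $H(\mathbf B\mathbf A)\le(1-d)mn$, where $\mathbf A\in\mathbb{Z}_2^{2n\times n}$ is a uniformly random full-rank isotropic matrix and $H$ denotes Shannon entropy (in bits).
   Context: Symplectic inner product on $\mathbb{Z}_2^{2n}$: $(\mathbf a,\mathbf b)\odot(\mathbf a',\mathbf b')=\mathbf a\cdot\mathbf b'+\mathbf a'\cdot\mathbf b\pmod2$. A uniformly random full-rank isotropic matrix in $\mathbb{Z}_2^{2n\times n}$ is uniform among matrices of column rank $n$ whose columns are pairwise symplectically orthogonal. *)

theory Defs
  imports Complex_Main "HOL-Library.Z2"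
begin

text \<open>Matrices over Z_2 of size r x c are represented as functions nat => nat => bit
  that vanish outside the index range {0..<r} x {0..<c}.\<close>

definition mats :: "nat \<Rightarrow> nat \<Rightarrow> (nat \<Rightarrow> nat \<Rightarrow> bit) set" where
  "mats r c = {M. \<forall>i j. (i \<ge> r \<or> j \<ge> c) \<longrightarrow> M i j = 0}"

definition matmul :: "nat \<Rightarrow> nat \<Rightarrow> nat \<Rightarrow> (nat \<Rightarrow> nat \<Rightarrow> bit) \<Rightarrow> (nat \<Rightarrow> nat \<Rightarrow> bit) \<Rightarrow> (nat \<Rightarrow> nat \<Rightarrow> bit)" where
  "matmul r k c B A = (\<lambda>i j. if i < r \<and> j < c then (\<Sum>l<k. B i l * A l j) else 0)"

definition symp_col :: "nat \<Rightarrow> (nat \<Rightarrow> nat \<Rightarrow> bit) \<Rightarrow> nat \<Rightarrow> nat \<Rightarrow> bit" where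
  "symp_col n A j j' = (\<Sum>i<n. A i j * A (n + i) j' + A i j' * A (n + i) j)"

definition full_col_rank :: "nat \<Rightarrow> nat \<Rightarrow> (nat \<Rightarrow> nat \<Rightarrow> bit) \<Rightarrow> bool" where
  "full_col_rank r c A = (\<forall>x :: nat \<Rightarrow> bit.
      (\<forall>i<r. (\<Sum>j<c. A i j * x j) = 0) \<longrightarrow> (\<forall>j<c. x j = 0))"

definition iso_mats :: "nat \<Rightarrow> (nat \<Rightarrow> nat \<Rightarrow> bit) set" where
  "iso_mats n = {A \<in> mats (2*n) n. full_col_rank (2*n) n A \<and>
                   (\<forall>j<n. \<forall>j'<n. symp_col n A j j' = 0)}"

definition entropy_uniform_image :: "'a set \<Rightarrow> ('a \<Rightarrow> 'b) \<Rightarrow> real" where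
  "entropy_uniform_image S f =
     - (\<Sum>y\<in>f ` S. let p = real (card {x\<in>S. f x = y}) / real (card S) in p * log 2 p)"

end

theory Submission
  imports Defs "HOL-Library.Function_Algebras" "HOL-Library.FuncSet"
begin

text \<open>Let \<open>r\<close> be the rank of \<open>B\<close> and \<open>M = B A\<close>. If \<open>r \<le> (1 - d) m\<close>, the columns of \<open>M\<close> lie
  in the column space of \<open>B\<close>, which has \<open>2 ^ r\<close> elements, so \<open>M\<close> takes at most \<open>2 ^ (r n)\<close>
  values. Otherwise the excess \<open>k = r - n\<close> is at least \<open>g n\<close> with \<open>g = (c - 1) / 2\<close>.
  The column space of \<open>A\<close> is Lagrangian, so the left kernel of \<open>A\<close> is \<open>J\<close> times it and is
  isotropic. Hence the left kernel of \<open>M\<close> contains that of \<open>B\<close>, has at least \<open>2 ^ (m - n)\<close>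
  elements and is isotropic for the form \<open>(z, z') \<mapsto> z\<^sup>T B J B\<^sup>T z'\<close>. Double counting such
  matrices together with flags of \<open>k\<close> kernel vectors independent modulo the left kernel of \<open>B\<close>
  bounds their number by \<open>(k + 1) 2 ^ (n r + 3 k / 2 - k\<^sup>2 / 8)\<close>, i.e. the isotropy saves
  \<open>\<Omega>(n\<^sup>2)\<close> bits. Finally, the entropy of \<open>B A\<close> is at most the logarithm of the number
  of values it takes.\<close>

section \<open>Vectors over \<open>\<int>\<^sub>2\<close>\<close>

declare add_bit_eq_xor [simp del] mult_bit_eq_and [simp del]

lemma bit_add_self [simp]: "(x::bit) + x = 0"
  by (cases x) simp_all

lemma vec_add_self [simp]: "(x::nat \<Rightarrow> bit) + x = 0"
  by (rule ext) simp

lemma vec_add_cancel_left: "(x::nat \<Rightarrow> bit) + (x + y) = y"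
  by (simp add: add.assoc[symmetric])

definition vecs :: "nat \<Rightarrow> (nat \<Rightarrow> bit) set" where
  "vecs m = {x. \<forall>i\<ge>m. x i = 0}"

definition dot :: "nat \<Rightarrow> (nat \<Rightarrow> bit) \<Rightarrow> (nat \<Rightarrow> bit) \<Rightarrow> bit" where
  "dot m x y = (\<Sum>i<m. x i * y i)"

definition is_subspace :: "(nat \<Rightarrow> bit) set \<Rightarrow> bool" where
  "is_subspace S \<longleftrightarrow> 0 \<in> S \<and> (\<forall>x\<in>S. \<forall>y\<in>S. x + y \<in> S)"

definition perp :: "nat \<Rightarrow> (nat \<Rightarrow> bit) set \<Rightarrow> (nat \<Rightarrow> bit) set" where
  "perp m S = {x \<in> vecs m. \<forall>s\<in>S. dot m x s = 0}"

definition unit_vec :: "nat \<Rightarrow> nat \<Rightarrow> bit" where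
  "unit_vec i = (\<lambda>j. if j = i then 1 else 0)"

lemma zero_in_vecs [simp]: "0 \<in> vecs m"
  by (simp add: vecs_def)

lemma add_in_vecs [simp]: "x \<in> vecs m \<Longrightarrow> y \<in> vecs m \<Longrightarrow> x + y \<in> vecs m"
  by (simp add: vecs_def)

lemma unit_vec_in_vecs: "i < m \<Longrightarrow> unit_vec i \<in> vecs m"
  by (simp add: unit_vec_def vecs_def)

lemma bij_betw_vecs_Pow: "bij_betw (\<lambda>x. {i. x i = 1}) (vecs m) (Pow {..<m})"
proof (rule bij_betw_byWitness[where f' = "\<lambda>I i. if i \<in> I then 1 else 0"])
  show "\<forall>x\<in>vecs m. (\<lambda>i. if i \<in> {i. x i = 1} then 1 else 0) = x"
    by (auto simp: fun_eq_iff intro: bit.exhaust)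
  show "\<forall>I\<in>Pow {..<m}. {i. (if i \<in> I then 1 else 0) = (1::bit)} = I"
    by auto
  show "(\<lambda>x. {i. x i = 1}) ` vecs m \<subseteq> Pow {..<m}"
    by (auto simp: vecs_def) (metis leI zero_neq_one)
  show "(\<lambda>I i. if i \<in> I then 1 else 0) ` Pow {..<m} \<subseteq> vecs m"
    by (auto simp: vecs_def)
qed

lemma finite_vecs [simp]: "finite (vecs m)"
  using bij_betw_finite[OF bij_betw_vecs_Pow] by simp

lemma card_vecs: "card (vecs m) = 2 ^ m"
  using bij_betw_same_card[OF bij_betw_vecs_Pow] by (simp add: card_Pow)

lemma dot_commute: "dot m x y = dot m y x"
  by (simp add: dot_def mult.commute)

lemma dot_add_left: "dot m (x + y) z = dot m x z + dot m y z"
  by (simp add: dot_def distrib_right sum.distrib)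

lemma dot_add_right: "dot m z (x + y) = dot m z x + dot m z y"
  by (simp add: dot_def distrib_left sum.distrib)

lemma dot_zero_left [simp]: "dot m 0 y = 0"
  by (simp add: dot_def)

lemma dot_zero_right [simp]: "dot m y 0 = 0"
  by (simp add: dot_def)

lemma dot_unit_vec:
  assumes "i < m"
  shows "dot m (unit_vec i) y = y i"
proof -
  have "dot m (unit_vec i) y = (\<Sum>j<m. if j = i then y j else 0)"
    unfolding dot_def unit_vec_def by (rule sum.cong) auto
  then show ?thesis
    using assms by simp
qed

lemma dot_nondegenerate:
  assumes "y \<in> vecs m" and "\<forall>z\<in>vecs m. dot m z y = 0"
  shows "y = 0"
proof
  fix i
  show "y i = 0 i"
    using assms unit_vec_in_vecs[of i m] dot_unit_vec[of i m y] by (cases "i < m") (auto simp: vecs_def)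
qed

lemma finite_subset_vecs: "S \<subseteq> vecs m \<Longrightarrow> finite S"
  using finite_subset finite_vecs by blast

lemma is_subspace_vecs [simp]: "is_subspace (vecs m)"
  by (simp add: is_subspace_def)

lemma is_subspace_Int: "is_subspace S \<Longrightarrow> is_subspace T \<Longrightarrow> is_subspace (S \<inter> T)"
  by (simp add: is_subspace_def)

lemma perp_subset_vecs: "perp m S \<subseteq> vecs m"
  by (auto simp: perp_def)

lemma is_subspace_image:
  assumes "is_subspace S" and "\<And>a b. f (a + b) = f a + f b"
  shows "is_subspace (f ` S)"
proof -
  have "f 0 = 0"
    using assms(2)[of 0 0] by (metis add_0_right vec_add_cancel_left)
  then show ?thesis
    using assms unfolding is_subspace_def by (metis image_eqI imageE)
qed

lemma card_kernel_functional:
  fixes h :: "(nat \<Rightarrow> bit) \<Rightarrow> bit"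
  assumes S: "is_subspace S" "finite S"
    and h_add: "\<And>x y. x \<in> S \<Longrightarrow> y \<in> S \<Longrightarrow> h (x + y) = h x + h y"
    and t: "t \<in> S" "h t = 1"
  shows "2 * card {s\<in>S. h s = 0} = card S"
proof -
  let ?Z = "{s\<in>S. h s = 0}" and ?O = "{s\<in>S. h s = 1}"
  have "S = ?Z \<union> ?O"
    by (auto intro: bit.exhaust)
  then have "card S = card ?Z + card ?O"
    using S(2) by (simp add: card_Un_disjoint[symmetric] disjoint_iff)
  moreover have "?O = (\<lambda>s. t + s) ` ?Z"
  proof (rule set_eqI, rule iffI)
    fix s assume "s \<in> ?O"
    then show "s \<in> (\<lambda>s. t + s) ` ?Z"
      using S t h_add[of t s]
      by (intro image_eqI[where x = "t + s"]) (auto simp: vec_add_cancel_left is_subspace_def)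
  next
    fix s assume "s \<in> (\<lambda>s. t + s) ` ?Z"
    then show "s \<in> ?O"
      using S t h_add by (auto simp: is_subspace_def)
  qed
  moreover have "inj_on (\<lambda>s. t + s) ?Z"
    by (rule inj_onI) simp
  ultimately show ?thesis
    by (simp add: card_image)
qed

lemma card_subspace_kernel_image:
  fixes f :: "(nat \<Rightarrow> bit) \<Rightarrow> (nat \<Rightarrow> bit)"
  assumes S: "is_subspace S" "finite S"
    and f_add: "\<And>x y. x \<in> S \<Longrightarrow> y \<in> S \<Longrightarrow> f (x + y) = f x + f y"
  shows "card S = card {x\<in>S. f x = 0} * card (f ` S)"
proof -
  let ?K = "{x\<in>S. f x = 0}"
  have fibre: "card {x\<in>S. f x = y} = card ?K" if "y \<in> f ` S" for y
  proof -
    from that obtain x0 where x0: "x0 \<in> S" "y = f x0"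
      by auto
    have "{x\<in>S. f x = y} = (\<lambda>z. x0 + z) ` ?K"
    proof (rule set_eqI, rule iffI)
      fix x assume "x \<in> {x\<in>S. f x = y}"
      then show "x \<in> (\<lambda>z. x0 + z) ` ?K"
        using S x0 f_add[of x0 x]
        by (intro image_eqI[where x = "x0 + x"]) (auto simp: vec_add_cancel_left is_subspace_def)
    next
      fix x assume "x \<in> (\<lambda>z. x0 + z) ` ?K"
      then show "x \<in> {x\<in>S. f x = y}"
        using S x0 f_add by (auto simp: is_subspace_def)
    qed
    moreover have "inj_on (\<lambda>z. x0 + z) ?K"
      by (rule inj_onI) simp
    ultimately show ?thesis
      by (simp add: card_image)
  qed
  have partition: "S = (\<Union>y\<in>f ` S. {x\<in>S. f x = y})"
    by auto
  have "card S = (\<Sum>y\<in>f ` S. card {x\<in>S. f x = y})"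
    by (subst partition, rule card_UN_disjoint) (use S in auto)
  also have "\<dots> = (\<Sum>y\<in>f ` S. card ?K)"
    by (rule sum.cong) (auto simp: fibre)
  finally show ?thesis
    by simp
qed

lemma card_perp_singleton:
  assumes "s \<in> vecs m" "s \<noteq> 0"
  shows "2 * card {x\<in>vecs m. dot m x s = 0} = 2 ^ m"
proof -
  obtain i where i: "s i = 1"
    using assms(2) by (metis bit.exhaust ext zero_fun_apply)
  then have "i < m"
    using assms(1) by (cases "i < m") (auto simp: vecs_def)
  then show ?thesis
    using card_kernel_functional[OF is_subspace_vecs[of m] finite_vecs[of m], where h = "\<lambda>x. dot m x s"]
      unit_vec_in_vecs[of i m] dot_unit_vec[of i m s] i by (simp add: dot_add_left card_vecs)
qed

text \<open>Count the pairs \<open>(x, s) \<in> vecs m \<times> S\<close> with \<open>dot m x s = 0\<close> in two ways.\<close>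

lemma card_perp:
  assumes S: "is_subspace S" "S \<subseteq> vecs m"
  shows "card (perp m S) * card S = 2 ^ m"
proof -
  have fin_S: "finite S"
    using S(2) by (rule finite_subset_vecs)
  define P where "P = Sigma (vecs m) (\<lambda>x. {s\<in>S. dot m x s = 0})"
  have "P = (\<lambda>(s, x). (x, s)) ` Sigma S (\<lambda>s. {x\<in>vecs m. dot m x s = 0})"
    by (auto simp: P_def)
  moreover have "inj_on (\<lambda>(s, x). (x, s)) (Sigma S (\<lambda>s. {x\<in>vecs m. dot m x s = 0}))"
    by (rule inj_onI) auto
  ultimately have P_by_s: "card P = (\<Sum>s\<in>S. card {x\<in>vecs m. dot m x s = 0})"
    using fin_S by (simp add: card_image card_SigmaI)
  have P_by_x: "card P = (\<Sum>x\<in>vecs m. card {s\<in>S. dot m x s = 0})"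
    unfolding P_def using fin_S by (simp add: card_SigmaI)
  have by_x: "2 * card {s\<in>S. dot m x s = 0} = card S + (if x \<in> perp m S then card S else 0)"
    if x: "x \<in> vecs m" for x
  proof (cases "x \<in> perp m S")
    case True
    then have "{s\<in>S. dot m x s = 0} = S"
      by (auto simp: perp_def)
    then show ?thesis
      using True by simp
  next
    case False
    then obtain t where "t \<in> S" "dot m x t = 1"
      using x by (auto simp: perp_def intro: bit.exhaust)
    then show ?thesis
      using False card_kernel_functional[OF S(1) fin_S, of "dot m x"] by (simp add: dot_add_right)
  qed
  have by_s: "2 * card {x\<in>vecs m. dot m x s = 0} = 2 ^ m + (if s = 0 then 2 ^ m else 0)"
    if "s \<in> S" for s
    using card_perp_singleton[of s m] that S(2) by (auto simp: card_vecs)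
  have "2 * card P = 2 ^ m * card S + card S * card (perp m S)"
    using perp_subset_vecs[of m S]
    by (simp add: P_by_x sum_distrib_left by_x sum.distrib card_vecs sum.If_cases Int_absorb1)
  moreover have "2 * card P = 2 ^ m * card S + 2 ^ m"
    using fin_S S(1) by (simp add: P_by_s sum_distrib_left by_s sum.distrib sum.If_cases is_subspace_def)
  ultimately show ?thesis
    by (simp add: mult.commute)
qed

section \<open>Spans and independence modulo a subspace\<close>

fun span_with :: "(nat \<Rightarrow> bit) set \<Rightarrow> (nat \<Rightarrow> bit) list \<Rightarrow> (nat \<Rightarrow> bit) set" where
  "span_with W [] = W"
| "span_with W (x # xs) = span_with W xs \<union> (\<lambda>y. x + y) ` span_with W xs"

fun indep_mod :: "(nat \<Rightarrow> bit) set \<Rightarrow> (nat \<Rightarrow> bit) list \<Rightarrow> bool" where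
  "indep_mod W [] = True"
| "indep_mod W (x # xs) \<longleftrightarrow> x \<notin> span_with W xs \<and> indep_mod W xs"

lemma is_subspace_insert_coset:
  assumes "is_subspace S"
  shows "is_subspace (S \<union> (\<lambda>y. x + y) ` S)"
proof -
  have add_closed: "a \<in> S \<Longrightarrow> b \<in> S \<Longrightarrow> a + b \<in> S" for a b
    using assms by (simp add: is_subspace_def)
  have mem: "y \<in> S \<union> (\<lambda>y. x + y) ` S \<longleftrightarrow> y \<in> S \<or> x + y \<in> S" for y
    by (auto simp: vec_add_cancel_left intro: image_eqI[where x = "x + y"])
  have closed: "a + b \<in> S \<or> x + (a + b) \<in> S"
    if "a \<in> S \<or> x + a \<in> S" "b \<in> S \<or> x + b \<in> S" for a b
    using that
  proof (elim disjE)
    assume "a \<in> S" "x + b \<in> S"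
    then show ?thesis
      using add_closed[of a "x + b"] by (simp add: add.left_commute)
  next
    assume "x + a \<in> S" "b \<in> S"
    then show ?thesis
      using add_closed[of "x + a" b] by (simp add: add.assoc)
  next
    assume "x + a \<in> S" "x + b \<in> S"
    then show ?thesis
      using add_closed[of "x + a" "x + b"] by (simp add: add.assoc add.left_commute vec_add_cancel_left)
  qed (simp add: add_closed)
  show ?thesis
    unfolding is_subspace_def
  proof (intro conjI ballI)
    show "0 \<in> S \<union> (\<lambda>y. x + y) ` S"
      using assms by (simp add: is_subspace_def)
    fix a b
    assume "a \<in> S \<union> (\<lambda>y. x + y) ` S" "b \<in> S \<union> (\<lambda>y. x + y) ` S"
    then show "a + b \<in> S \<union> (\<lambda>y. x + y) ` S"
      using closed unfolding mem by blast
  qed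
qed

lemma card_insert_coset:
  assumes "is_subspace S" "finite S" "x \<notin> S"
  shows "card (S \<union> (\<lambda>y. x + y) ` S) = 2 * card S"
proof -
  have "S \<inter> (\<lambda>y. x + y) ` S = {}"
  proof safe
    fix y assume "y \<in> S" "x + y \<in> S"
    then have "(x + y) + y \<in> S"
      using assms(1) unfolding is_subspace_def by blast
    then show "x + y \<in> {}"
      using assms(3) by (simp add: add.assoc)
  qed
  moreover have "inj_on (\<lambda>y. x + y) S"
    by (rule inj_onI) simp
  ultimately show ?thesis
    using assms(2) by (simp add: card_Un_disjoint card_image)
qed

lemma is_subspace_span_with: "is_subspace W \<Longrightarrow> is_subspace (span_with W xs)"
  by (induction xs) (auto intro: is_subspace_insert_coset)

lemma subset_span_with: "W \<subseteq> span_with W xs"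
  by (induction xs) auto

lemma mem_span_with: "0 \<in> W \<Longrightarrow> x \<in> set xs \<Longrightarrow> x \<in> span_with W xs"
proof (induction xs)
  case (Cons a xs)
  then show ?case
  proof (cases "x = a")
    case True
    have "0 \<in> span_with W xs"
      using Cons subset_span_with by blast
    then show ?thesis
      using True by (auto intro: image_eqI[where x = 0])
  qed auto
qed simp

lemma span_with_least: "is_subspace K \<Longrightarrow> W \<subseteq> K \<Longrightarrow> set xs \<subseteq> K \<Longrightarrow> span_with W xs \<subseteq> K"
  by (induction xs) (auto simp: is_subspace_def)

lemma span_with_mono: "W \<subseteq> W' \<Longrightarrow> span_with W xs \<subseteq> span_with W' xs"
  by (induction xs) auto

lemma span_with_append: "span_with W (xs @ ys) = span_with (span_with W ys) xs"
  by (induction xs) auto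

lemma finite_span_with: "finite W \<Longrightarrow> finite (span_with W xs)"
  by (induction xs) auto

lemma span_with_subset_vecs: "W \<subseteq> vecs m \<Longrightarrow> set xs \<subseteq> vecs m \<Longrightarrow> span_with W xs \<subseteq> vecs m"
  by (rule span_with_least) auto

lemma card_span_with_le: "finite W \<Longrightarrow> card (span_with W xs) \<le> card W * 2 ^ length xs"
proof (induction xs)
  case (Cons x xs)
  have "card (span_with W (x # xs)) \<le> card (span_with W xs) + card ((\<lambda>y. x + y) ` span_with W xs)"
    by (simp add: card_Un_le)
  also have "\<dots> \<le> 2 * card (span_with W xs)"
    using card_image_le[OF finite_span_with[OF Cons.prems]] by simp
  finally show ?case
    using Cons by simp
qed simp

lemma card_span_with:
  "is_subspace W \<Longrightarrow> finite W \<Longrightarrow> indep_mod W xs \<Longrightarrow> card (span_with W xs) = card W * 2 ^ length xs"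
  by (induction xs) (simp_all add: card_insert_coset is_subspace_span_with finite_span_with)

lemma card_span_with_zero_pow2: "\<exists>j. card (span_with {0} xs) = 2 ^ j"
proof (induction xs)
  case Nil
  show ?case
    by (rule exI[of _ 0]) simp
next
  case (Cons x xs)
  then obtain j where j: "card (span_with {0} xs) = 2 ^ j"
    by blast
  have subspace: "is_subspace (span_with {0} xs)"
    by (rule is_subspace_span_with) (simp add: is_subspace_def)
  show ?case
  proof (cases "x \<in> span_with {0} xs")
    case True
    then have "span_with {0} (x # xs) = span_with {0} xs"
      using subspace by (auto simp: is_subspace_def)
    then show ?thesis
      using j by metis
  next
    case False
    then have "card (span_with {0} (x # xs)) = 2 ^ Suc j"
      using card_insert_coset[OF subspace finite_span_with, of x] j by simp
    then show ?thesis
      by blast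
  qed
qed

lemma card_subspace_pow2:
  assumes "is_subspace S" "finite S"
  shows "\<exists>j. card S = 2 ^ j"
proof -
  obtain xs where xs: "set xs = S"
    using finite_list[OF assms(2)] by blast
  have "span_with {0} xs \<subseteq> S"
    by (rule span_with_least) (use assms xs in \<open>auto simp: is_subspace_def\<close>)
  moreover have "S \<subseteq> span_with {0} xs"
    using mem_span_with[of "{0}"] xs by auto
  ultimately show ?thesis
    using card_span_with_zero_pow2[of xs] by auto
qed

lemma add_mem_span_with: "w \<in> W \<Longrightarrow> s \<in> span_with {0} ys \<Longrightarrow> w + s \<in> span_with W ys"
proof (induction ys arbitrary: s)
  case (Cons y ys)
  show ?case
  proof (cases "s \<in> span_with {0} ys")
    case True
    then show ?thesis
      using Cons by (simp only: span_with.simps) blast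
  next
    case False
    then obtain s' where s': "s' \<in> span_with {0} ys" "s = y + s'"
      using Cons.prems(2) by (simp only: span_with.simps) blast
    have "w + s = y + (w + s')"
      by (simp only: s'(2) add.left_commute)
    then show ?thesis
      using Cons.IH[OF Cons.prems(1) s'(1)] by (simp only: span_with.simps) blast
  qed
qed simp

lemma span_with_decomp:
  "is_subspace W \<Longrightarrow> z \<in> span_with W xs \<Longrightarrow> \<exists>w\<in>W. \<exists>s\<in>span_with {0} xs. z = w + s"
proof (induction xs arbitrary: z)
  case Nil
  then show ?case
    by (metis add_0_right singletonI span_with.simps(1))
next
  case (Cons x xs)
  show ?case
  proof (cases "z \<in> span_with W xs")
    case True
    then show ?thesis
      using Cons by (metis UnI1 span_with.simps(2))
  next
    case False
    then obtain z' where z': "z' \<in> span_with W xs" "z = x + z'"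
      using Cons.prems by auto
    then obtain w s where ws: "w \<in> W" "s \<in> span_with {0} xs" "z' = w + s"
      using Cons by blast
    have "x + s \<in> span_with {0} (x # xs)"
      using ws by simp
    moreover have "z = w + (x + s)"
      using z' ws by (simp add: ac_simps)
    ultimately show ?thesis
      using ws by blast
  qed
qed

lemma image_span_with:
  assumes "\<And>a b. f (a + b) = f a + f b"
  shows "f ` span_with W xs = span_with (f ` W) (map f xs)"
proof (induction xs)
  case (Cons x xs)
  have "f ` ((\<lambda>y. x + y) ` span_with W xs) = (\<lambda>y. f x + y) ` (f ` span_with W xs)"
    by (simp add: image_image assms)
  then show ?case
    using Cons by (simp add: image_Un)
qed simp

lemma indep_mod_antimono: "W \<subseteq> W' \<Longrightarrow> indep_mod W' xs \<Longrightarrow> indep_mod W xs"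
  by (induction xs) (simp, metis indep_mod.simps(2) span_with_mono subsetD)

lemma indep_mod_append: "indep_mod W ys \<Longrightarrow> indep_mod (span_with W ys) xs \<Longrightarrow> indep_mod W (xs @ ys)"
  by (induction xs) (auto simp: span_with_append)

section \<open>Counting lists built element by element\<close>

lemma lists_Suc_eq_Sigma:
  assumes step: "\<And>x ys. Q (x # ys) \<longleftrightarrow> x \<in> A ys \<and> Q ys"
  shows "{xs. length xs = Suc j \<and> Q xs} = (\<lambda>(ys, x). x # ys) ` Sigma {ys. length ys = j \<and> Q ys} A"
proof (rule set_eqI, rule iffI)
  fix xs
  assume "xs \<in> {xs. length xs = Suc j \<and> Q xs}"
  then obtain x ys where "xs = x # ys" "length ys = j" "Q (x # ys)"
    by (cases xs) auto
  then show "xs \<in> (\<lambda>(ys, x). x # ys) ` Sigma {ys. length ys = j \<and> Q ys} A"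
    using step by (intro image_eqI[where x = "(ys, x)"]) auto
qed (use step in auto)

lemma card_lists_Suc_step:
  assumes step: "\<And>x ys. Q (x # ys) \<longleftrightarrow> x \<in> A ys \<and> Q ys"
    and fin: "\<And>ys. Q ys \<Longrightarrow> finite (A ys)"
  shows "card {xs. length xs = Suc j \<and> Q xs} = (\<Sum>ys | length ys = j \<and> Q ys. card (A ys))"
proof -
  have fin_lists: "finite {xs. length xs = j' \<and> Q xs}" for j'
  proof (induction j')
    case 0
    show ?case
      by (rule finite_subset[of _ "{[]}"]) auto
  next
    case (Suc j')
    then show ?case
      unfolding lists_Suc_eq_Sigma[OF step] using fin by auto
  qed
  have "inj_on (\<lambda>(ys, x). x # ys) (Sigma {ys. length ys = j \<and> Q ys} A)"
    by (rule inj_onI) auto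
  then show ?thesis
    unfolding lists_Suc_eq_Sigma[OF step] using fin fin_lists by (simp add: card_image card_SigmaI)
qed

lemma card_lists_le_prod:
  assumes step: "\<And>x ys. Q (x # ys) \<longleftrightarrow> x \<in> A ys \<and> Q ys"
    and fin: "\<And>ys. Q ys \<Longrightarrow> finite (A ys)"
    and bound: "\<And>ys. Q ys \<Longrightarrow> card (A ys) \<le> b (length ys)"
  shows "card {xs. length xs = j \<and> Q xs} \<le> (\<Prod>i<j. b i)"
proof (induction j)
  case 0
  have "card {xs. length xs = 0 \<and> Q xs} \<le> card {[] :: 'a list}"
    by (rule card_mono) auto
  then show ?case
    by simp
next
  case (Suc j)
  have "card {xs. length xs = Suc j \<and> Q xs} = (\<Sum>ys | length ys = j \<and> Q ys. card (A ys))"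
    by (rule card_lists_Suc_step[OF step fin])
  also have "\<dots> \<le> (\<Sum>ys | length ys = j \<and> Q ys. b j)"
    by (rule sum_mono) (use bound in auto)
  also have "\<dots> \<le> (\<Prod>i<j. b i) * b j"
    using Suc.IH by simp
  finally show ?case
    by simp
qed

lemma card_lists_ge_power:
  assumes step: "\<And>x ys. Q (x # ys) \<longleftrightarrow> x \<in> A ys \<and> Q ys" and "Q []"
    and fin: "\<And>ys. Q ys \<Longrightarrow> finite (A ys)"
    and bound: "\<And>ys. Q ys \<Longrightarrow> length ys < j \<Longrightarrow> b \<le> card (A ys)"
  shows "b ^ j \<le> card {xs. length xs = j \<and> Q xs}"
proof -
  have "b ^ i \<le> card {xs. length xs = i \<and> Q xs}" if "i \<le> j" for i
    using that
  proof (induction i)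
    case 0
    have "{xs. length xs = 0 \<and> Q xs} = {[]}"
      using \<open>Q []\<close> by auto
    then show ?case
      by simp
  next
    case (Suc i)
    have "b ^ Suc i \<le> card {xs. length xs = i \<and> Q xs} * b"
      using Suc by (simp add: mult.commute)
    also have "\<dots> = (\<Sum>ys | length ys = i \<and> Q ys. b)"
      by simp
    also have "\<dots> \<le> (\<Sum>ys | length ys = i \<and> Q ys. card (A ys))"
      by (rule sum_mono) (use bound Suc.prems in auto)
    also have "\<dots> = card {xs. length xs = Suc i \<and> Q xs}"
      by (rule card_lists_Suc_step[OF step fin, symmetric])
    finally show ?case .
  qed
  then show ?thesis
    by simp
qed

section \<open>Matrices and the symplectic form\<close>

definition vec_mat :: "nat \<Rightarrow> (nat \<Rightarrow> bit) \<Rightarrow> (nat \<Rightarrow> nat \<Rightarrow> bit) \<Rightarrow> nat \<Rightarrow> bit" where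
  "vec_mat m z M = (\<lambda>j. \<Sum>i<m. z i * M i j)"

definition mat_vec :: "nat \<Rightarrow> (nat \<Rightarrow> nat \<Rightarrow> bit) \<Rightarrow> (nat \<Rightarrow> bit) \<Rightarrow> nat \<Rightarrow> bit" where
  "mat_vec k M y = (\<lambda>i. \<Sum>l<k. M i l * y l)"

text \<open>\<open>symp_J n\<close> swaps the two halves of a vector of length \<open>2 n\<close>, so that
  \<open>dot (2 * n) (symp_J n u) v\<close> is the symplectic product \<open>u \<odot> v\<close>.\<close>

definition symp_J :: "nat \<Rightarrow> (nat \<Rightarrow> bit) \<Rightarrow> nat \<Rightarrow> bit" where
  "symp_J n u = (\<lambda>i. if i < n then u (n + i) else if i < 2 * n then u (i - n) else 0)"

definition col :: "(nat \<Rightarrow> nat \<Rightarrow> bit) \<Rightarrow> nat \<Rightarrow> nat \<Rightarrow> bit" where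
  "col M j = (\<lambda>i. M i j)"

definition left_ker :: "nat \<Rightarrow> (nat \<Rightarrow> nat \<Rightarrow> bit) \<Rightarrow> (nat \<Rightarrow> bit) set" where
  "left_ker m M = {z \<in> vecs m. vec_mat m z M = 0}"

lemma dot_vec_mat: "dot k (vec_mat m z M) y = dot m z (mat_vec k M y)"
proof -
  have "dot k (vec_mat m z M) y = (\<Sum>l<k. \<Sum>i<m. z i * M i l * y l)"
    by (simp add: dot_def vec_mat_def sum_distrib_right)
  also have "\<dots> = (\<Sum>i<m. \<Sum>l<k. z i * M i l * y l)"
    by (rule sum.swap)
  also have "\<dots> = dot m z (mat_vec k M y)"
    by (simp add: dot_def mat_vec_def sum_distrib_left mult.assoc)
  finally show ?thesis .
qed

lemma vec_mat_add: "vec_mat m (z + z') M = vec_mat m z M + vec_mat m z' M"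
  by (rule ext) (simp add: vec_mat_def distrib_right sum.distrib)

lemma mat_vec_add: "mat_vec k M (y + y') = mat_vec k M y + mat_vec k M y'"
  by (rule ext) (simp add: mat_vec_def distrib_left sum.distrib)

lemma symp_J_add: "symp_J n (u + u') = symp_J n u + symp_J n u'"
  by (rule ext) (simp add: symp_J_def)

lemma vec_mat_zero [simp]: "vec_mat m 0 M = 0"
  by (rule ext) (simp add: vec_mat_def)

lemma mat_vec_zero [simp]: "mat_vec k M 0 = 0"
  by (rule ext) (simp add: mat_vec_def)

lemma symp_J_zero [simp]: "symp_J n 0 = 0"
  by (rule ext) (simp add: symp_J_def)

lemma vec_mat_in_vecs: "M \<in> mats m c \<Longrightarrow> vec_mat m z M \<in> vecs c"
  by (simp add: vec_mat_def vecs_def mats_def)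

lemma mat_vec_in_vecs: "M \<in> mats r k \<Longrightarrow> mat_vec k M y \<in> vecs r"
  by (simp add: mat_vec_def vecs_def mats_def)

lemma symp_J_in_vecs: "symp_J n u \<in> vecs (2 * n)"
  by (simp add: symp_J_def vecs_def)

lemma symp_J_symp_J: "u \<in> vecs (2 * n) \<Longrightarrow> symp_J n (symp_J n u) = u"
  by (rule ext) (auto simp: symp_J_def vecs_def)

lemma inj_on_symp_J: "inj_on (symp_J n) (vecs (2 * n))"
  by (metis inj_onI symp_J_symp_J)

lemma col_in_vecs: "M \<in> mats m n \<Longrightarrow> col M j \<in> vecs m"
  by (simp add: col_def mats_def vecs_def)

lemma vec_mat_eq_dot_col: "M \<in> mats m n \<Longrightarrow> vec_mat m z M j = (if j < n then dot m z (col M j) else 0)"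
  by (simp add: vec_mat_def dot_def col_def mats_def)

lemma vec_mat_matmul:
  assumes "A \<in> mats k n"
  shows "vec_mat m z (matmul m k n B A) = vec_mat k (vec_mat m z B) A"
proof
  fix j
  show "vec_mat m z (matmul m k n B A) j = vec_mat k (vec_mat m z B) A j"
  proof (cases "j < n")
    case True
    have "vec_mat m z (matmul m k n B A) j = (\<Sum>i<m. \<Sum>l<k. z i * B i l * A l j)"
      using True by (simp add: vec_mat_def matmul_def sum_distrib_left mult.assoc)
    also have "\<dots> = (\<Sum>l<k. \<Sum>i<m. z i * B i l * A l j)"
      by (rule sum.swap)
    also have "\<dots> = vec_mat k (vec_mat m z B) A j"
      by (simp add: vec_mat_def sum_distrib_right)
    finally show ?thesis .
  next
    case False
    then show ?thesis
      using assms by (simp add: vec_mat_def matmul_def mats_def)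
  qed
qed

lemma col_matmul: "B \<in> mats m k \<Longrightarrow> j < n \<Longrightarrow> col (matmul m k n B A) j = mat_vec k B (col A j)"
  by (auto simp: col_def matmul_def mat_vec_def mats_def fun_eq_iff)

lemma matmul_in_mats: "matmul m k n B A \<in> mats m n"
  by (simp add: matmul_def mats_def)

lemma sum_lessThan_double:
  fixes g :: "nat \<Rightarrow> 'a::comm_monoid_add"
  shows "(\<Sum>i<2 * n. g i) = (\<Sum>i<n. g i) + (\<Sum>i<n. g (n + i))"
proof -
  have "{..<2 * n} = {..<n} \<union> {n..<n + n}"
    by auto
  then have "(\<Sum>i<2 * n. g i) = (\<Sum>i\<in>{..<n} \<union> {n..<n + n}. g i)"
    by simp
  also have "\<dots> = (\<Sum>i<n. g i) + (\<Sum>i\<in>{n..<n + n}. g i)"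
    by (rule sum.union_disjoint) auto
  also have "(\<Sum>i\<in>{n..<n + n}. g i) = (\<Sum>i<n. g (n + i))"
    using sum.shift_bounds_nat_ivl[of g 0 n n] by (simp add: lessThan_atLeast0 add.commute)
  finally show ?thesis .
qed

lemma dot_symp_J: "dot (2 * n) (symp_J n u) v = (\<Sum>i<n. u (n + i) * v i + u i * v (n + i))"
proof -
  have "dot (2 * n) (symp_J n u) v
      = (\<Sum>i<n. symp_J n u i * v i) + (\<Sum>i<n. symp_J n u (n + i) * v (n + i))"
    unfolding dot_def by (rule sum_lessThan_double)
  also have "(\<Sum>i<n. symp_J n u i * v i) = (\<Sum>i<n. u (n + i) * v i)"
    by (rule sum.cong) (auto simp: symp_J_def)
  also have "(\<Sum>i<n. symp_J n u (n + i) * v (n + i)) = (\<Sum>i<n. u i * v (n + i))"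
    by (rule sum.cong) (auto simp: symp_J_def)
  finally show ?thesis
    by (simp add: sum.distrib)
qed

lemma dot_symp_J_mat_vec:
  "dot (2 * n) (symp_J n (mat_vec n A x)) (mat_vec n A y) = (\<Sum>j<n. \<Sum>j'<n. x j * y j' * symp_col n A j j')"
proof -
  let ?a = "\<lambda>i j j'. A i j * A (n + i) j' + A i j' * A (n + i) j"
  have expand: "(\<Sum>j<n. A (n + i) j * x j) * (\<Sum>j'<n. A i j' * y j')
      + (\<Sum>j<n. A i j * x j) * (\<Sum>j'<n. A (n + i) j' * y j')
      = (\<Sum>j<n. \<Sum>j'<n. x j * y j' * ?a i j j')" for i
  proof -
    have t1: "(\<Sum>j<n. A (n + i) j * x j) * (\<Sum>j'<n. A i j' * y j')
        = (\<Sum>j<n. \<Sum>j'<n. x j * y j' * (A i j' * A (n + i) j))"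
      unfolding sum_product by (intro sum.cong refl) (simp add: mult_ac)
    have t2: "(\<Sum>j<n. A i j * x j) * (\<Sum>j'<n. A (n + i) j' * y j')
        = (\<Sum>j<n. \<Sum>j'<n. x j * y j' * (A i j * A (n + i) j'))"
      unfolding sum_product by (intro sum.cong refl) (simp add: mult_ac)
    show ?thesis
      unfolding t1 t2 by (simp add: sum.distrib[symmetric] distrib_left add.commute)
  qed
  have "dot (2 * n) (symp_J n (mat_vec n A x)) (mat_vec n A y) = (\<Sum>i<n. \<Sum>j<n. \<Sum>j'<n. x j * y j' * ?a i j j')"
    by (simp add: dot_symp_J mat_vec_def expand)
  also have "\<dots> = (\<Sum>j<n. \<Sum>j'<n. \<Sum>i<n. x j * y j' * ?a i j j')"
    by (subst sum.swap) (intro sum.cong refl sum.swap)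
  also have "\<dots> = (\<Sum>j<n. \<Sum>j'<n. x j * y j' * symp_col n A j j')"
    by (simp add: symp_col_def sum_distrib_left)
  finally show ?thesis .
qed

lemma inj_on_mat_vec_iso_mats:
  assumes A: "A \<in> iso_mats n"
  shows "inj_on (mat_vec n A) (vecs n)"
proof (rule inj_onI)
  fix x y
  assume x: "x \<in> vecs n" and y: "y \<in> vecs n" and eq: "mat_vec n A x = mat_vec n A y"
  have "(\<Sum>j<n. A i j * (x + y) j) = 0" for i
    using fun_cong[OF eq, of i] by (simp add: mat_vec_def distrib_left sum.distrib)
  then have "\<forall>j<n. (x + y) j = 0"
    using A unfolding iso_mats_def full_col_rank_def by blast
  then show "x = y"
    using x y by (auto simp: vecs_def fun_eq_iff) (metis add_0_right bit_add_self add.assoc not_le)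
qed

lemma dot_symp_J_iso_mats:
  assumes "A \<in> iso_mats n"
  shows "dot (2 * n) (symp_J n (mat_vec n A x)) (mat_vec n A y) = 0"
  using assms by (simp add: dot_symp_J_mat_vec iso_mats_def)

text \<open>The column space \<open>C\<close> of \<open>A\<close> has \<open>2 ^ n\<close> elements and \<open>J C \<subseteq> C\<^sup>\<bottom>\<close>, where \<open>C\<^sup>\<bottom>\<close>
  also has \<open>2 ^ n\<close> elements; hence \<open>C\<^sup>\<bottom> = J C\<close>, i.e. the column space is Lagrangian.\<close>

lemma symp_J_left_ker_iso_mats:
  assumes A: "A \<in> iso_mats n" and u: "u \<in> left_ker (2 * n) A"
  shows "symp_J n u \<in> mat_vec n A ` vecs n"
proof -
  let ?C = "mat_vec n A ` vecs n"
  have A_mats: "A \<in> mats (2 * n) n"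
    using A by (simp add: iso_mats_def)
  have C_vecs: "?C \<subseteq> vecs (2 * n)"
    using mat_vec_in_vecs[OF A_mats] by auto
  have card_C: "card ?C = 2 ^ n"
    using card_image[OF inj_on_mat_vec_iso_mats[OF A]] card_vecs by simp
  have "card (perp (2 * n) ?C) * 2 ^ n = 2 ^ n * 2 ^ n"
    using card_perp[OF is_subspace_image[OF is_subspace_vecs mat_vec_add] C_vecs] card_C
    by (simp add: mult_2 power_add)
  then have card_perp_C: "card (perp (2 * n) ?C) = 2 ^ n"
    by simp
  have "symp_J n ` ?C \<subseteq> perp (2 * n) ?C"
    using dot_symp_J_iso_mats[OF A] by (auto simp: perp_def symp_J_in_vecs)
  moreover have "card (symp_J n ` ?C) = 2 ^ n"
    using card_C card_image[OF inj_on_subset[OF inj_on_symp_J C_vecs]] by simp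
  ultimately have perp_C: "perp (2 * n) ?C = symp_J n ` ?C"
    using card_perp_C by (metis card_subset_eq finite_subset_vecs perp_subset_vecs)
  have "u \<in> perp (2 * n) ?C"
    using u by (auto simp: perp_def left_ker_def dot_vec_mat[symmetric])
  then obtain c where "c \<in> ?C" "u = symp_J n c"
    unfolding perp_C by blast
  then show ?thesis
    using C_vecs symp_J_symp_J by auto
qed

lemma left_ker_iso_mats_isotropic:
  assumes A: "A \<in> iso_mats n" and u: "u \<in> left_ker (2 * n) A" and u': "u' \<in> left_ker (2 * n) A"
  shows "dot (2 * n) (symp_J n u) u' = 0"
proof -
  obtain x where x: "symp_J n u = mat_vec n A x"
    using symp_J_left_ker_iso_mats[OF A u] by blast
  obtain x' where x': "symp_J n u' = mat_vec n A x'"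
    using symp_J_left_ker_iso_mats[OF A u'] by blast
  have "u' \<in> vecs (2 * n)"
    using u' by (simp add: left_ker_def)
  then have "u' = symp_J n (mat_vec n A x')"
    using symp_J_symp_J x' by metis
  then show ?thesis
    using x dot_symp_J_iso_mats[OF A, of x' x] by (simp add: dot_commute)
qed

lemma bij_betw_mats_cols:
  assumes "W \<subseteq> vecs m"
  shows "bij_betw (\<lambda>M. restrict (col M) {..<n}) {M \<in> mats m n. \<forall>j<n. col M j \<in> W} (Pi\<^sub>E {..<n} (\<lambda>_. W))"
proof (rule bij_betw_byWitness[where f' = "\<lambda>F i j. if j < n then F j i else 0"])
  show "\<forall>M\<in>{M \<in> mats m n. \<forall>j<n. col M j \<in> W}. (\<lambda>i j. if j < n then restrict (col M) {..<n} j i else 0) = M"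
    by (auto simp: fun_eq_iff col_def mats_def)
  show "\<forall>F\<in>Pi\<^sub>E {..<n} (\<lambda>_. W). restrict (col (\<lambda>i j. if j < n then F j i else 0)) {..<n} = F"
    by (auto simp: fun_eq_iff col_def PiE_def extensional_def)
  show "(\<lambda>M. restrict (col M) {..<n}) ` {M \<in> mats m n. \<forall>j<n. col M j \<in> W} \<subseteq> Pi\<^sub>E {..<n} (\<lambda>_. W)"
    by auto
  show "(\<lambda>F i j. if j < n then F j i else 0) ` Pi\<^sub>E {..<n} (\<lambda>_. W) \<subseteq> {M \<in> mats m n. \<forall>j<n. col M j \<in> W}"
    using assms by (fastforce simp: mats_def col_def vecs_def)
qed

lemma card_mats_cols_in:
  assumes "W \<subseteq> vecs m"
  shows "card {M \<in> mats m n. \<forall>j<n. col M j \<in> W} = card W ^ n"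
    and "finite {M \<in> mats m n. \<forall>j<n. col M j \<in> W}"
  using bij_betw_same_card[OF bij_betw_mats_cols[OF assms]] bij_betw_finite[OF bij_betw_mats_cols[OF assms]]
    finite_subset_vecs[OF assms] by (simp_all add: card_PiE finite_PiE)

lemma finite_mats: "finite (mats m n)"
proof -
  have "mats m n = {M \<in> mats m n. \<forall>j<n. col M j \<in> vecs m}"
    using col_in_vecs by blast
  then show ?thesis
    using card_mats_cols_in(2)[of "vecs m" m n] by simp
qed

lemma is_subspace_left_ker: "is_subspace (left_ker m M)"
  by (auto simp: is_subspace_def left_ker_def vec_mat_add)

lemma left_ker_subset_vecs: "left_ker m M \<subseteq> vecs m"
  by (auto simp: left_ker_def)

lemma card_left_ker_ge:
  assumes M: "M \<in> mats m n"
  shows "2 ^ (m - n) \<le> card (left_ker m M)"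
proof -
  have "card (vecs m) = card (left_ker m M) * card ((\<lambda>z. vec_mat m z M) ` vecs m)"
    unfolding left_ker_def by (rule card_subspace_kernel_image) (simp_all add: vec_mat_add)
  moreover have "card ((\<lambda>z. vec_mat m z M) ` vecs m) \<le> 2 ^ n"
    using card_mono[OF finite_vecs, of _ n] vec_mat_in_vecs[OF M] card_vecs by (metis image_subsetI)
  ultimately have le: "2 ^ m \<le> card (left_ker m M) * 2 ^ n"
    by (metis card_vecs mult_le_mono2)
  show ?thesis
  proof (cases "n \<le> m")
    case True
    then have "2 ^ (m - n) * 2 ^ n \<le> card (left_ker m M) * (2::nat) ^ n"
      using le by (simp add: power_add[symmetric])
    then show ?thesis
      by simp
  next
    case False
    have "0 \<in> left_ker m M"
      using is_subspace_left_ker by (simp add: is_subspace_def)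
    then have "0 < card (left_ker m M)"
      using finite_subset_vecs[OF left_ker_subset_vecs] by (auto simp: card_gt_0_iff)
    then show ?thesis
      using False by simp
  qed
qed

lemma mats_left_ker_supset_iff_cols:
  assumes "S \<subseteq> vecs m"
  shows "{M \<in> mats m n. S \<subseteq> left_ker m M} = {M \<in> mats m n. \<forall>j<n. col M j \<in> perp m S}"
proof -
  have "S \<subseteq> left_ker m M \<longleftrightarrow> (\<forall>j<n. col M j \<in> perp m S)" if M: "M \<in> mats m n" for M
  proof -
    have "S \<subseteq> left_ker m M \<longleftrightarrow> (\<forall>z\<in>S. \<forall>j. vec_mat m z M j = 0)"
      using assms by (auto simp: left_ker_def fun_eq_iff)
    also have "\<dots> \<longleftrightarrow> (\<forall>j<n. col M j \<in> perp m S)"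
      using col_in_vecs[OF M] by (auto simp: vec_mat_eq_dot_col[OF M] perp_def dot_commute)
    finally show ?thesis .
  qed
  then show ?thesis
    by blast
qed

lemma card_mats_left_ker_supset:
  assumes "S \<subseteq> vecs m"
  shows "card {M \<in> mats m n. S \<subseteq> left_ker m M} = card (perp m S) ^ n"
    and "finite {M \<in> mats m n. S \<subseteq> left_ker m M}"
  using card_mats_cols_in[OF perp_subset_vecs[of m S], of n] mats_left_ker_supset_iff_cols[OF assms, of n]
  by simp_all

section \<open>Entropy and numerical estimates\<close>

lemma entropy_le_log_card:
  fixes p :: "'a \<Rightarrow> real"
  assumes Y: "finite Y" and pos: "\<And>y. y \<in> Y \<Longrightarrow> 0 < p y" and sum_1: "(\<Sum>y\<in>Y. p y) = 1"
  shows "- (\<Sum>y\<in>Y. p y * log 2 (p y)) \<le> log 2 (card Y)"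
proof -
  define c where "c = real (card Y)"
  have c_pos: "0 < c"
    using Y sum_1 by (auto simp: c_def card_gt_0_iff)
  have gibbs: "p y * (- ln (p y) - ln c) \<le> 1 / c - p y" if y: "y \<in> Y" for y
  proof -
    have py: "0 < p y"
      by (rule pos[OF y])
    have "- ln (p y) - ln c = ln (1 / (p y * c))"
      using py c_pos by (simp add: ln_div ln_mult)
    also have "\<dots> \<le> 1 / (p y * c) - 1"
      by (rule ln_le_minus_one) (use py c_pos in simp)
    finally have "p y * (- ln (p y) - ln c) \<le> p y * (1 / (p y * c) - 1)"
      using py by (simp add: mult_left_mono)
    also have "\<dots> = 1 / c - p y"
      using py c_pos by (simp add: field_simps)
    finally show ?thesis .
  qed
  have "(\<Sum>y\<in>Y. p y * (- ln (p y) - ln c)) \<le> (\<Sum>y\<in>Y. 1 / c - p y)"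
    by (rule sum_mono) (rule gibbs)
  also have "\<dots> = 0"
    using sum_1 c_pos by (simp add: sum_subtractf c_def)
  finally have "- (\<Sum>y\<in>Y. p y * ln (p y)) \<le> ln c * (\<Sum>y\<in>Y. p y)"
    by (simp add: algebra_simps sum_subtractf sum_distrib_left sum_negf)
  then have "- (\<Sum>y\<in>Y. p y * ln (p y)) \<le> ln c"
    using sum_1 by simp
  then have "- (\<Sum>y\<in>Y. p y * ln (p y)) / ln 2 \<le> ln c / ln 2"
    by (rule divide_right_mono) simp
  then show ?thesis
    by (simp add: log_def c_def sum_divide_distrib[symmetric])
qed

lemma entropy_uniform_image_le_log_card:
  assumes S: "finite S" "S \<noteq> {}"
  shows "entropy_uniform_image S f \<le> log 2 (card (f ` S))"
proof -
  define p where "p y = real (card {x\<in>S. f x = y}) / real (card S)" for y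
  have pos: "0 < p y" if "y \<in> f ` S" for y
  proof -
    have "{x\<in>S. f x = y} \<noteq> {}"
      using that by auto
    then show ?thesis
      using S by (simp add: p_def card_gt_0_iff)
  qed
  have partition: "S = (\<Union>y\<in>f ` S. {x\<in>S. f x = y})"
    by auto
  have "card S = (\<Sum>y\<in>f ` S. card {x\<in>S. f x = y})"
    by (subst partition, rule card_UN_disjoint) (use S in auto)
  then have "(\<Sum>y\<in>f ` S. p y) = real (card S) / real (card S)"
    by (simp add: p_def sum_divide_distrib[symmetric])
  also have "\<dots> = 1"
    using S by simp
  finally have "- (\<Sum>y\<in>f ` S. p y * log 2 (p y)) \<le> log 2 (card (f ` S))"
    using S(1) pos by (intro entropy_le_log_card) auto
  then show ?thesis
    by (simp add: entropy_uniform_image_def p_def Let_def)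
qed

lemma of_nat_sum_diff_lessThan:
  "f \<le> M \<Longrightarrow> real (\<Sum>j<f. M - j) = real f * real M - real f * (real f - 1) / 2"
proof (induction f)
  case (Suc f)
  then have "real (\<Sum>j<Suc f. M - j) = real f * real M - real f * (real f - 1) / 2 + (real M - real f)"
    by (simp add: of_nat_diff)
  then show ?case
    by (simp add: field_simps)
qed simp

text \<open>The exponent produced by the double count for radical depth \<open>e\<close>, \<open>f = excess - e\<close>
  and \<open>r = n + e + f\<close>.\<close>

lemma flag_exponent_bound:
  fixes n m e f :: real
  assumes "0 \<le> e" "0 \<le> f"
  shows "(2 * n - (n + e + f)) * e + (f * m - f * (f - 1) / 2) + n * n - (e * e - e + (m - n - 1) * f)
    \<le> n * (n + e + f) + 3 / 2 * (e + f) - (e + f)\<^sup>2 / 8"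
proof -
  have "n * (n + e + f) + 3 / 2 * (e + f) - (e + f)\<^sup>2 / 8
      - ((2 * n - (n + e + f)) * e + (f * m - f * (f - 1) / 2) + n * n - (e * e - e + (m - n - 1) * f))
      = e / 2 + 2 * e\<^sup>2 + e * f + f\<^sup>2 / 2 - (e + f)\<^sup>2 / 8"
    by (simp add: field_simps power2_eq_square)
  moreover have "0 \<le> e / 2 + 2 * e\<^sup>2 + e * f + f\<^sup>2 / 2 - (e + f)\<^sup>2 / 8"
    using assms by (simp add: power2_eq_square field_simps)
  ultimately show ?thesis
    by linarith
qed

lemma high_rank_exponent_le:
  fixes n m r d g :: real
  assumes g: "0 < g" and n: "1 \<le> n" "96 \<le> g\<^sup>2 * n" and d: "0 \<le> d" "d \<le> g\<^sup>2 / 64" "d \<le> 1 / 2"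
    and r: "(1 + g) * n < r" "(1 - d) * m < r" "r \<le> m" "r \<le> 2 * n"
  shows "(r - n + 1) + (n * r + 3 / 2 * (r - n) - (r - n)\<^sup>2 / 8) \<le> (1 - d) * m * n"
proof -
  have "(g * n)\<^sup>2 \<le> (r - n)\<^sup>2"
    using g n r by (intro power_mono) (simp_all add: algebra_simps)
  then have saving: "g\<^sup>2 * n\<^sup>2 \<le> (r - n)\<^sup>2"
    by (simp add: power_mult_distrib)
  have "0 \<le> (1 + g) * n"
    using g n by simp
  then have m_nonneg: "0 \<le> m"
    using r by linarith
  then have "1 / 2 * m \<le> (1 - d) * m"
    using d by (intro mult_right_mono) simp_all
  then have "m \<le> 4 * n"
    using r by linarith
  then have "d * m * n \<le> g\<^sup>2 / 64 * (4 * n) * n"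
    using d n m_nonneg by (intro mult_mono) simp_all
  then have loss: "d * m * n \<le> g\<^sup>2 * n\<^sup>2 / 16"
    by (simp add: power2_eq_square)
  have linear: "7 / 2 * n \<le> g\<^sup>2 * n\<^sup>2 / 16"
    using n by (simp add: power2_eq_square field_simps)
  have "n * r \<le> n * m"
    using n r by (simp add: mult_left_mono)
  moreover have "(1 - d) * m * n = n * m - d * m * n"
    by (simp add: algebra_simps)
  moreover have "r - n + 1 + 3 / 2 * (r - n) \<le> 7 / 2 * n"
    using r n by (simp add: field_simps)
  ultimately show ?thesis
    using saving loss linear by linarith
qed

section \<open>Products \<open>B A\<close>\<close>

locale left_factor =
  fixes m n :: nat and B :: "nat \<Rightarrow> nat \<Rightarrow> bit"
  assumes B_mats: "B \<in> mats m (2 * n)"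
begin

definition row_space :: "(nat \<Rightarrow> bit) set" where
  "row_space = (\<lambda>z. vec_mat m z B) ` vecs m"

definition col_space :: "(nat \<Rightarrow> bit) set" where
  "col_space = mat_vec (2 * n) B ` vecs (2 * n)"

text \<open>\<open>gram z = B J B\<^sup>T z\<close>, so \<open>dot m z (gram z')\<close> is the symplectic product of the rows
  \<open>z\<^sup>T B\<close> and \<open>z'\<^sup>T B\<close>.\<close>

definition gram :: "(nat \<Rightarrow> bit) \<Rightarrow> nat \<Rightarrow> bit" where
  "gram z = mat_vec (2 * n) B (symp_J n (vec_mat m z B))"

definition radical :: "(nat \<Rightarrow> bit) set" where
  "radical = {z \<in> vecs m. gram z = 0}"

definition admissible :: "(nat \<Rightarrow> nat \<Rightarrow> bit) set" where
  "admissible = {M \<in> mats m n. left_ker m B \<subseteq> left_ker m M \<and>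
                   (\<forall>z\<in>left_ker m M. \<forall>z'\<in>left_ker m M. dot m z (gram z') = 0)}"

definition products :: "(nat \<Rightarrow> nat \<Rightarrow> bit) set" where
  "products = matmul m (2 * n) n B ` iso_mats n"

lemma gram_add: "gram (z + z') = gram z + gram z'"
  by (simp add: gram_def vec_mat_add symp_J_add mat_vec_add)

lemma gram_zero [simp]: "gram 0 = 0"
  by (simp add: gram_def)

lemma gram_in_vecs: "gram z \<in> vecs m"
  unfolding gram_def by (rule mat_vec_in_vecs[OF B_mats])

lemma dot_gram: "dot m z (gram z') = dot (2 * n) (vec_mat m z B) (symp_J n (vec_mat m z' B))"
  by (simp add: gram_def dot_vec_mat)

lemma is_subspace_row_space: "is_subspace row_space"
  unfolding row_space_def by (rule is_subspace_image) (simp_all add: vec_mat_add)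

lemma row_space_subset_vecs: "row_space \<subseteq> vecs (2 * n)"
  unfolding row_space_def using vec_mat_in_vecs[OF B_mats] by auto

lemma is_subspace_radical: "is_subspace radical"
  by (auto simp: is_subspace_def radical_def gram_add)

lemma radical_subset_vecs: "radical \<subseteq> vecs m"
  by (auto simp: radical_def)

lemma left_ker_subset_radical: "left_ker m B \<subseteq> radical"
  by (auto simp: left_ker_def radical_def gram_def)

lemma products_subset_admissible: "products \<subseteq> admissible"
proof
  fix M
  assume "M \<in> products"
  then obtain A where A: "A \<in> iso_mats n" and M: "M = matmul m (2 * n) n B A"
    by (auto simp: products_def)
  have ker_M: "z \<in> left_ker m M \<longleftrightarrow> z \<in> vecs m \<and> vec_mat m z B \<in> left_ker (2 * n) A" for z
    using M A vec_mat_in_vecs[OF B_mats] by (auto simp: left_ker_def vec_mat_matmul iso_mats_def)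
  have "dot m z (gram z') = 0" if "z \<in> left_ker m M" "z' \<in> left_ker m M" for z z'
  proof -
    have "dot (2 * n) (symp_J n (vec_mat m z' B)) (vec_mat m z B) = 0"
      using that ker_M by (blast intro: left_ker_iso_mats_isotropic[OF A])
    then show ?thesis
      by (simp add: dot_gram dot_commute[of "2 * n" "vec_mat m z B"])
  qed
  moreover have "left_ker m B \<subseteq> left_ker m M"
  proof
    fix z
    assume "z \<in> left_ker m B"
    then show "z \<in> left_ker m M"
      using ker_M[of z] by (simp add: left_ker_def)
  qed
  ultimately show "M \<in> admissible"
    using M by (simp add: admissible_def matmul_in_mats)
qed

lemma finite_admissible: "finite admissible"
  by (rule finite_subset[OF _ finite_mats[of m n]]) (auto simp: admissible_def)

lemma card_left_ker_mult_row_space: "card (left_ker m B) * card row_space = 2 ^ m"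
  using card_subspace_kernel_image[OF is_subspace_vecs[of m] finite_vecs[of m], where f = "\<lambda>z. vec_mat m z B"]
  by (simp add: vec_mat_add left_ker_def row_space_def card_vecs)

lemma perp_row_space: "perp (2 * n) row_space = {x \<in> vecs (2 * n). mat_vec (2 * n) B x = 0}"
proof -
  have "x \<in> perp (2 * n) row_space \<longleftrightarrow> x \<in> vecs (2 * n) \<and> mat_vec (2 * n) B x = 0" for x
  proof -
    have "x \<in> perp (2 * n) row_space \<longleftrightarrow> x \<in> vecs (2 * n) \<and> (\<forall>z\<in>vecs m. dot m z (mat_vec (2 * n) B x) = 0)"
      by (auto simp: perp_def row_space_def dot_vec_mat[symmetric] dot_commute)
    also have "\<dots> \<longleftrightarrow> x \<in> vecs (2 * n) \<and> mat_vec (2 * n) B x = 0"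
      using dot_nondegenerate[OF mat_vec_in_vecs[OF B_mats]] by auto
    finally show ?thesis .
  qed
  then show ?thesis
    by blast
qed

lemma card_col_space_mult_perp: "card col_space * card (perp (2 * n) row_space) = 2 ^ (2 * n)"
  using card_subspace_kernel_image[OF is_subspace_vecs[of "2 * n"] finite_vecs[of "2 * n"], where f = "mat_vec (2 * n) B"]
  unfolding col_space_def perp_row_space by (simp add: mat_vec_add card_vecs ac_simps)

text \<open>On the radical, \<open>z \<mapsto> J (z\<^sup>T B)\<close> has kernel \<open>left_ker m B\<close> and lands in the
  orthogonal complement of the row space.\<close>

lemma card_radical_le: "card radical \<le> card (left_ker m B) * card (perp (2 * n) row_space)"
proof -
  let ?g = "\<lambda>z. symp_J n (vec_mat m z B)"
  have "card radical = card {z\<in>radical. ?g z = 0} * card (?g ` radical)"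
    by (rule card_subspace_kernel_image[OF is_subspace_radical])
      (simp_all add: finite_subset_vecs[OF radical_subset_vecs] vec_mat_add symp_J_add)
  moreover have "?g z = 0 \<longleftrightarrow> vec_mat m z B = 0" for z
    using inj_on_symp_J[of n] vec_mat_in_vecs[OF B_mats] by (metis inj_onD symp_J_zero zero_in_vecs)
  then have "{z\<in>radical. ?g z = 0} = left_ker m B"
    using left_ker_subset_radical by (auto simp: left_ker_def radical_def)
  moreover have "?g ` radical \<subseteq> perp (2 * n) row_space"
    by (auto simp: perp_def row_space_def radical_def symp_J_in_vecs dot_commute dot_gram[symmetric])
  then have "card (?g ` radical) \<le> card (perp (2 * n) row_space)"
    by (rule card_mono[OF finite_subset_vecs[OF perp_subset_vecs]])
  ultimately show ?thesis
    by simp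
qed

lemma rank_exists:
  obtains r where "card row_space = 2 ^ r" "r \<le> m" "r \<le> 2 * n" "card (left_ker m B) = 2 ^ (m - r)"
    "card (perp (2 * n) row_space) = 2 ^ (2 * n - r)" "card col_space = 2 ^ r"
proof -
  obtain r where r: "card row_space = 2 ^ r"
    using card_subspace_pow2[OF is_subspace_row_space finite_subset_vecs[OF row_space_subset_vecs]] by blast
  have "card row_space \<le> 2 ^ (2 * n)"
    using card_mono[OF finite_vecs row_space_subset_vecs] card_vecs by metis
  then have r_2n: "r \<le> 2 * n"
    using r by simp
  have "card row_space \<le> 2 ^ m"
    unfolding row_space_def using card_image_le[OF finite_vecs] card_vecs by metis
  then have r_m: "r \<le> m"
    using r by simp
  have "card (left_ker m B) * 2 ^ r = 2 ^ (m - r) * 2 ^ r"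
    using card_left_ker_mult_row_space r r_m by (simp add: power_add[symmetric])
  then have ker: "card (left_ker m B) = 2 ^ (m - r)"
    by simp
  have "card (perp (2 * n) row_space) * 2 ^ r = 2 ^ (2 * n - r) * 2 ^ r"
    using card_perp[OF is_subspace_row_space row_space_subset_vecs] r r_2n by (simp add: power_add[symmetric])
  then have perp: "card (perp (2 * n) row_space) = 2 ^ (2 * n - r)"
    by simp
  have "card col_space * 2 ^ (2 * n - r) = 2 ^ r * 2 ^ (2 * n - r)"
    using card_col_space_mult_perp perp r_2n by (simp add: power_add[symmetric])
  then have "card col_space = 2 ^ r"
    by simp
  then show ?thesis
    using that r r_m r_2n ker perp by simp
qed

lemma card_products_le:
  assumes "card row_space = 2 ^ r"
  shows "card products \<le> 2 ^ (r * n)"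
proof -
  obtain r' where r': "card row_space = 2 ^ r'" "card col_space = 2 ^ r'"
    by (rule rank_exists) blast
  have col_space_vecs: "col_space \<subseteq> vecs m"
    using mat_vec_in_vecs[OF B_mats] by (auto simp: col_space_def)
  have "products \<subseteq> {M \<in> mats m n. \<forall>j<n. col M j \<in> col_space}"
    using B_mats by (auto simp: products_def col_space_def matmul_in_mats col_matmul iso_mats_def col_in_vecs)
  then have "card products \<le> card {M \<in> mats m n. \<forall>j<n. col M j \<in> col_space}"
    by (rule card_mono[OF card_mats_cols_in(2)[OF col_space_vecs]])
  also have "\<dots> = (2 ^ r) ^ n"
    using card_mats_cols_in(1)[OF col_space_vecs] r' assms by simp
  finally show ?thesis
    by (simp add: power_mult)
qed

end

locale left_factor_rank = left_factor +
  fixes r :: nat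
  assumes card_row_space: "card row_space = 2 ^ r" and n_le_r: "n \<le> r"
begin

lemma rank_facts:
  shows r_le_m: "r \<le> m" and r_le_2n: "r \<le> 2 * n"
    and card_left_ker_B: "card (left_ker m B) = 2 ^ (m - r)"
    and card_perp_row_space: "card (perp (2 * n) row_space) = 2 ^ (2 * n - r)"
proof -
  obtain r' where "card row_space = 2 ^ r'" "r' \<le> m" "r' \<le> 2 * n" "card (left_ker m B) = 2 ^ (m - r')"
    "card (perp (2 * n) row_space) = 2 ^ (2 * n - r')"
    by (rule rank_exists) blast
  moreover from this have "r' = r"
    using card_row_space by simp
  ultimately show "r \<le> m" "r \<le> 2 * n" "card (left_ker m B) = 2 ^ (m - r)"
    "card (perp (2 * n) row_space) = 2 ^ (2 * n - r)"
    by simp_all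
qed

lemma finite_left_ker_B: "finite (left_ker m B)"
  by (rule finite_subset_vecs[OF left_ker_subset_vecs])

definition excess :: nat where
  "excess = r - n"

definition rad_part :: "(nat \<Rightarrow> nat \<Rightarrow> bit) \<Rightarrow> (nat \<Rightarrow> bit) set" where
  "rad_part M = left_ker m M \<inter> radical"

definition rad_flags :: "(nat \<Rightarrow> nat \<Rightarrow> bit) \<Rightarrow> nat \<Rightarrow> (nat \<Rightarrow> bit) list set" where
  "rad_flags M e = {xs. length xs = e \<and> set xs \<subseteq> rad_part M \<and> indep_mod (left_ker m B) xs}"

text \<open>A flag of an admissible \<open>M\<close>, i.e. \<open>excess\<close> vectors of its left kernel independent
  modulo \<open>left_ker m B\<close>, is taken to consist of \<open>rad_depth M\<close> vectors of the radical (as many as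
  possible) followed by vectors independent modulo the radical; by admissibility the latter are
  pairwise orthogonal for \<open>gram\<close>.\<close>

definition rad_depth :: "(nat \<Rightarrow> nat \<Rightarrow> bit) \<Rightarrow> nat" where
  "rad_depth M = Max {e. e \<le> excess \<and> rad_flags M e \<noteq> {}}"

definition ker_flags :: "(nat \<Rightarrow> nat \<Rightarrow> bit) \<Rightarrow> nat \<Rightarrow> (nat \<Rightarrow> bit) list set" where
  "ker_flags M f = {ys. length ys = f \<and> set ys \<subseteq> left_ker m M \<and> indep_mod radical ys}"

definition rad_lists :: "nat \<Rightarrow> (nat \<Rightarrow> bit) list set" where
  "rad_lists e = {xs. length xs = e \<and> set xs \<subseteq> radical \<and> indep_mod (left_ker m B) xs}"

definition iso_lists :: "nat \<Rightarrow> (nat \<Rightarrow> bit) list set" where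
  "iso_lists f = {ys. length ys = f \<and> set ys \<subseteq> vecs m \<and> indep_mod radical ys \<and>
                     sorted_wrt (\<lambda>y y'. dot m y (gram y') = 0) ys}"

definition mats_killing :: "(nat \<Rightarrow> bit) list \<Rightarrow> (nat \<Rightarrow> nat \<Rightarrow> bit) set" where
  "mats_killing xs = {M \<in> mats m n. span_with (left_ker m B) xs \<subseteq> left_ker m M}"

definition admissible_depth :: "nat \<Rightarrow> (nat \<Rightarrow> nat \<Rightarrow> bit) set" where
  "admissible_depth e = {M \<in> admissible. rad_depth M = e}"

lemma indep_mod_radical_gram:
  "set ys \<subseteq> vecs m \<Longrightarrow> indep_mod radical ys \<Longrightarrow> indep_mod {0} (map gram ys)"
proof (induction ys)
  case (Cons x ys)
  have "gram x \<notin> span_with {0} (map gram ys)"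
  proof
    assume "gram x \<in> span_with {0} (map gram ys)"
    moreover have "gram ` span_with {0} ys = span_with {0} (map gram ys)"
      using image_span_with[of gram "{0}" ys] gram_add by simp
    ultimately obtain s where s: "s \<in> span_with {0} ys" "gram x = gram s"
      by (metis imageE)
    have "s \<in> vecs m"
      using span_with_subset_vecs[of "{0}" m ys] s Cons.prems by auto
    then have "x + s \<in> radical"
      using s Cons.prems by (simp add: radical_def gram_add)
    then have "(x + s) + s \<in> span_with radical ys"
      by (rule add_mem_span_with[OF _ s(1)])
    then show False
      using Cons.prems by (simp add: add.assoc)
  qed
  moreover have "indep_mod {0} (map gram ys)"
    using Cons.prems by (intro Cons.IH) simp_all
  ultimately show ?case
    by (simp only: list.map indep_mod.simps) blast
qed simp

lemma finite_iso_lists: "finite (iso_lists f)"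
  by (rule finite_subset[OF _ finite_lists_length_eq[OF finite_vecs[of m], of f]]) (auto simp: iso_lists_def)

text \<open>The \<open>gram\<close>-images of an element of \<open>iso_lists\<close> are linearly independent, so each
  orthogonality constraint on the next element halves the number of choices.\<close>

lemma card_iso_lists_le: "card (iso_lists f) \<le> (\<Prod>j<f. 2 ^ (m - j))"
proof -
  let ?A = "\<lambda>ys. {x\<in>vecs m. x \<notin> span_with radical ys \<and> (\<forall>y\<in>set ys. dot m x (gram y) = 0)}"
  let ?Q = "\<lambda>ys. set ys \<subseteq> vecs m \<and> indep_mod radical ys \<and> sorted_wrt (\<lambda>y y'. dot m y (gram y') = 0) ys"
  have bound: "card (?A ys) \<le> 2 ^ (m - length ys)" if Q: "?Q ys" for ys
  proof -
    let ?S = "span_with {0} (map gram ys)"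
    have subspace: "is_subspace ?S"
      by (rule is_subspace_span_with) (simp add: is_subspace_def)
    have S_vecs: "?S \<subseteq> vecs m"
      by (rule span_with_subset_vecs) (use gram_in_vecs in auto)
    have card_S: "card ?S = 2 ^ length ys"
      using card_span_with[OF _ _ indep_mod_radical_gram, of ys] Q by (simp add: is_subspace_def)
    have "2 ^ length ys \<le> (2::nat) ^ m"
      using card_mono[OF finite_vecs S_vecs] card_S card_vecs by metis
    then have "length ys \<le> m"
      by simp
    then have "card (perp m ?S) * 2 ^ length ys = 2 ^ (m - length ys) * 2 ^ length ys"
      using card_perp[OF subspace S_vecs] card_S by (simp add: power_add[symmetric])
    then have card_perp_S: "card (perp m ?S) = 2 ^ (m - length ys)"
      by simp
    have "?A ys \<subseteq> perp m ?S"
    proof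
      fix x
      assume x: "x \<in> ?A ys"
      have "?S \<subseteq> {s. dot m x s = 0}"
        by (rule span_with_least) (use x in \<open>auto simp: is_subspace_def dot_add_right\<close>)
      then show "x \<in> perp m ?S"
        using x by (auto simp: perp_def)
    qed
    then have "card (?A ys) \<le> card (perp m ?S)"
      by (rule card_mono[OF finite_subset_vecs[OF perp_subset_vecs]])
    with card_perp_S show ?thesis
      by simp
  qed
  have "card {ys. length ys = f \<and> ?Q ys} \<le> (\<Prod>j<f. 2 ^ (m - j))"
    by (rule card_lists_le_prod[where A = ?A]) (use bound in auto)
  then show ?thesis
    by (simp add: iso_lists_def)
qed

lemma finite_rad_lists: "finite (rad_lists e)"
  by (rule finite_subset[OF _ finite_lists_length_eq[OF finite_subset_vecs[OF radical_subset_vecs], of e]])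
    (auto simp: rad_lists_def)

lemma card_rad_lists_le: "card (rad_lists e) \<le> card radical ^ e"
proof -
  have "rad_lists e \<subseteq> {xs. set xs \<subseteq> radical \<and> length xs = e}"
    by (auto simp: rad_lists_def)
  then have "card (rad_lists e) \<le> card {xs. set xs \<subseteq> radical \<and> length xs = e}"
    by (rule card_mono[OF finite_lists_length_eq[OF finite_subset_vecs[OF radical_subset_vecs]]])
  then show ?thesis
    by (simp add: card_lists_length_eq[OF finite_subset_vecs[OF radical_subset_vecs]])
qed

lemma card_mats_killing:
  assumes "set xs \<subseteq> vecs m" "indep_mod (left_ker m B) xs" "length xs = excess"
  shows "card (mats_killing xs) = 2 ^ (n * n)" and "finite (mats_killing xs)"
proof -
  let ?S = "span_with (left_ker m B) xs"
  have S_vecs: "?S \<subseteq> vecs m"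
    by (rule span_with_subset_vecs) (use assms left_ker_subset_vecs in auto)
  have card_S: "card ?S * 2 ^ n = 2 ^ m"
    using card_span_with[OF is_subspace_left_ker finite_left_ker_B assms(2)] assms(3)
      card_left_ker_B r_le_m n_le_r by (simp add: excess_def power_add[symmetric])
  then have "card (perp m ?S) * card ?S = 2 ^ n * card ?S"
    using card_perp[OF is_subspace_span_with[OF is_subspace_left_ker] S_vecs] by (simp add: mult.commute)
  moreover have "card ?S \<noteq> 0"
    using card_S by (metis mult_0 power_not_zero zero_neq_numeral)
  ultimately have "card (perp m ?S) = 2 ^ n"
    by simp
  then show "card (mats_killing xs) = 2 ^ (n * n)" "finite (mats_killing xs)"
    using card_mats_left_ker_supset[OF S_vecs, of n] by (simp_all add: mats_killing_def power_mult)
qed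

lemma flags_in_lists:
  assumes M: "M \<in> admissible" and T1: "T1 \<in> rad_flags M e" and T2: "T2 \<in> ker_flags M f"
  shows "T1 \<in> rad_lists e" "T2 \<in> iso_lists f" "M \<in> mats_killing (T2 @ T1)"
proof -
  have M': "M \<in> mats m n" "left_ker m B \<subseteq> left_ker m M"
      "\<forall>z\<in>left_ker m M. \<forall>z'\<in>left_ker m M. dot m z (gram z') = 0"
    using M by (simp_all add: admissible_def)
  have T2_ker: "set T2 \<subseteq> left_ker m M"
    using T2 by (simp add: ker_flags_def)
  have "sorted_wrt (\<lambda>y y'. dot m y (gram y') = 0) T2"
    using T2_ker M'(3) by (induction T2) auto
  then show "T2 \<in> iso_lists f"
    using T2 T2_ker left_ker_subset_vecs by (auto simp: ker_flags_def iso_lists_def)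
  show "T1 \<in> rad_lists e"
    using T1 by (auto simp: rad_flags_def rad_lists_def rad_part_def)
  have "set (T2 @ T1) \<subseteq> left_ker m M"
    using T1 T2_ker by (auto simp: rad_flags_def rad_part_def)
  then have "span_with (left_ker m B) (T2 @ T1) \<subseteq> left_ker m M"
    by (rule span_with_least[OF is_subspace_left_ker M'(2)])
  then show "M \<in> mats_killing (T2 @ T1)"
    using M'(1) by (simp add: mats_killing_def)
qed

lemma
  shows rad_depth_le_excess: "rad_depth M \<le> excess"
    and rad_flags_rad_depth: "rad_flags M (rad_depth M) \<noteq> {}"
    and le_rad_depth: "e \<le> excess \<Longrightarrow> rad_flags M e \<noteq> {} \<Longrightarrow> e \<le> rad_depth M"
proof -
  have fin: "finite {e. e \<le> excess \<and> rad_flags M e \<noteq> {}}"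
    by (rule finite_subset[of _ "{..excess}"]) auto
  have "0 \<in> {e. e \<le> excess \<and> rad_flags M e \<noteq> {}}"
    by (auto simp: rad_flags_def)
  then have "rad_depth M \<in> {e. e \<le> excess \<and> rad_flags M e \<noteq> {}}"
    unfolding rad_depth_def using Max_in[OF fin] by blast
  then show "rad_depth M \<le> excess" "rad_flags M (rad_depth M) \<noteq> {}"
    by auto
  show "e \<le> excess \<Longrightarrow> rad_flags M e \<noteq> {} \<Longrightarrow> e \<le> rad_depth M"
    unfolding rad_depth_def using Max_ge[OF fin] by blast
qed

lemma is_subspace_rad_part: "is_subspace (rad_part M)"
  by (simp add: rad_part_def is_subspace_Int is_subspace_left_ker is_subspace_radical)

lemma finite_rad_part: "finite (rad_part M)"
  using finite_subset_vecs[OF left_ker_subset_vecs] by (auto simp: rad_part_def)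

lemma left_ker_B_subset_rad_part: "M \<in> admissible \<Longrightarrow> left_ker m B \<subseteq> rad_part M"
  using left_ker_subset_radical by (auto simp: admissible_def rad_part_def)

lemma card_rad_part_ge:
  assumes M: "M \<in> admissible" and T: "T \<in> rad_flags M e"
  shows "card (left_ker m B) * 2 ^ e \<le> card (rad_part M)"
proof -
  have "span_with (left_ker m B) T \<subseteq> rad_part M"
    by (rule span_with_least[OF is_subspace_rad_part left_ker_B_subset_rad_part[OF M]])
      (use T in \<open>simp add: rad_flags_def\<close>)
  then have "card (span_with (left_ker m B) T) \<le> card (rad_part M)"
    by (rule card_mono[OF finite_rad_part])
  then show ?thesis
    using card_span_with[OF is_subspace_left_ker finite_left_ker_B] T by (simp add: rad_flags_def)
qed

text \<open>By maximality of \<open>rad_depth M\<close>, a radical flag of that length spans \<open>rad_part M\<close>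
  modulo \<open>left_ker m B\<close>.\<close>

lemma card_rad_part_le:
  assumes M: "M \<in> admissible" and less: "rad_depth M < excess"
  shows "card (rad_part M) \<le> card (left_ker m B) * 2 ^ rad_depth M"
proof -
  obtain T where T: "T \<in> rad_flags M (rad_depth M)"
    using rad_flags_rad_depth by blast
  have "rad_part M \<subseteq> span_with (left_ker m B) T"
  proof
    fix x
    assume x: "x \<in> rad_part M"
    show "x \<in> span_with (left_ker m B) T"
    proof (rule ccontr)
      assume "x \<notin> span_with (left_ker m B) T"
      then have "x # T \<in> rad_flags M (Suc (rad_depth M))"
        using T x by (simp add: rad_flags_def)
      then have "Suc (rad_depth M) \<le> rad_depth M"
        using less by (intro le_rad_depth) auto
      then show False
        by simp
    qed
  qed
  then have "card (rad_part M) \<le> card (span_with (left_ker m B) T)"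
    by (rule card_mono[OF finite_span_with[OF finite_left_ker_B]])
  also have "\<dots> \<le> card (left_ker m B) * 2 ^ rad_depth M"
    using card_span_with_le[OF finite_left_ker_B, of T] T by (simp add: rad_flags_def)
  finally show ?thesis .
qed

lemma finite_rad_flags: "finite (rad_flags M e)"
  by (rule finite_subset[OF _ finite_lists_length_eq[OF finite_rad_part, of M e]])
    (auto simp: rad_flags_def)

lemma finite_ker_flags: "finite (ker_flags M f)"
  by (rule finite_subset[OF _ finite_lists_length_eq[OF finite_subset_vecs[OF left_ker_subset_vecs], of m M f]])
    (auto simp: ker_flags_def)

lemma card_rad_flags_ge:
  assumes M: "M \<in> admissible"
  shows "(card (left_ker m B) * 2 ^ (rad_depth M - 1)) ^ rad_depth M \<le> card (rad_flags M (rad_depth M))"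
proof -
  let ?e = "rad_depth M"
  let ?Q = "\<lambda>xs. set xs \<subseteq> rad_part M \<and> indep_mod (left_ker m B) xs"
  let ?A = "\<lambda>ys. rad_part M - span_with (left_ker m B) ys"
  obtain T where "T \<in> rad_flags M ?e"
    using rad_flags_rad_depth by blast
  then have card_rad_part: "card (left_ker m B) * 2 ^ ?e \<le> card (rad_part M)"
    by (rule card_rad_part_ge[OF M])
  have bound: "card (left_ker m B) * 2 ^ (?e - 1) \<le> card (?A ys)" if Q: "?Q ys" and len: "length ys < ?e" for ys
  proof -
    have sub: "span_with (left_ker m B) ys \<subseteq> rad_part M"
      by (rule span_with_least[OF is_subspace_rad_part left_ker_B_subset_rad_part[OF M]]) (use Q in blast)
    have "card (?A ys) + card (span_with (left_ker m B) ys) = card (rad_part M)"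
      using card_Diff_subset[OF finite_span_with[OF finite_left_ker_B] sub] card_mono[OF finite_rad_part sub]
      by simp
    moreover have "card (span_with (left_ker m B) ys) \<le> card (left_ker m B) * 2 ^ (?e - 1)"
    proof -
      have "length ys \<le> ?e - 1"
        using len by simp
      then have "card (left_ker m B) * 2 ^ length ys \<le> card (left_ker m B) * 2 ^ (?e - 1)"
        by (simp add: power_increasing)
      then show ?thesis
        using card_span_with[OF is_subspace_left_ker finite_left_ker_B] Q by simp
    qed
    moreover have "card (left_ker m B) * 2 ^ ?e = 2 * (card (left_ker m B) * 2 ^ (?e - 1))"
      using len by (cases ?e) auto
    ultimately show ?thesis
      using card_rad_part by linarith
  qed
  have "(card (left_ker m B) * 2 ^ (?e - 1)) ^ ?e \<le> card {xs. length xs = ?e \<and> ?Q xs}"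
    by (rule card_lists_ge_power[where A = ?A]) (use bound finite_rad_part in auto)
  then show ?thesis
    by (simp add: rad_flags_def)
qed

lemma left_ker_Int_span_with_radical:
  assumes "set ys \<subseteq> left_ker m M"
  shows "left_ker m M \<inter> span_with radical ys \<subseteq> span_with (rad_part M) ys"
proof
  fix z
  assume z: "z \<in> left_ker m M \<inter> span_with radical ys"
  obtain w s where ws: "w \<in> radical" "s \<in> span_with {0} ys" "z = w + s"
    using span_with_decomp[OF is_subspace_radical, of z ys] z by blast
  have "s \<in> left_ker m M"
    using span_with_least[OF is_subspace_left_ker, of "{0}" m M ys] is_subspace_left_ker[of m M] assms ws(2)
    by (auto simp: is_subspace_def)
  moreover have "z + s = w"
    using ws(3) by (simp add: add.assoc)
  ultimately have "w \<in> rad_part M"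
    using z ws(1) is_subspace_left_ker[of m M] by (auto simp: rad_part_def is_subspace_def)
  then show "z \<in> span_with (rad_part M) ys"
    using add_mem_span_with[OF _ ws(2)] ws(3) by blast
qed

text \<open>Modulo the radical, a partial kernel flag together with \<open>rad_part M\<close> spans at most
  \<open>2 ^ (m - n - 1)\<close> kernel vectors, while the kernel has at least \<open>2 ^ (m - n)\<close> elements.\<close>

lemma card_ker_flags_ge:
  assumes M: "M \<in> admissible"
  shows "(2 ^ (m - n - 1)) ^ (excess - rad_depth M) \<le> card (ker_flags M (excess - rad_depth M))"
proof -
  let ?e = "rad_depth M" and ?K = "left_ker m M"
  let ?Q = "\<lambda>xs. set xs \<subseteq> ?K \<and> indep_mod radical xs"
  let ?A = "\<lambda>ys. ?K - span_with radical ys"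
  have fin_K: "finite ?K"
    by (rule finite_subset_vecs[OF left_ker_subset_vecs])
  have M_mats: "M \<in> mats m n"
    using M by (simp add: admissible_def)
  have bound: "2 ^ (m - n - 1) \<le> card (?A ys)" if Q: "?Q ys" and len: "length ys < excess - ?e" for ys
  proof -
    have less: "?e < excess"
      using len by simp
    have "?K \<inter> span_with radical ys \<subseteq> span_with (rad_part M) ys"
      using Q by (intro left_ker_Int_span_with_radical) simp
    then have "card (?K \<inter> span_with radical ys) \<le> card (span_with (rad_part M) ys)"
      by (rule card_mono[OF finite_span_with[OF finite_rad_part]])
    also have "\<dots> \<le> card (rad_part M) * 2 ^ length ys"
      by (rule card_span_with_le[OF finite_rad_part])
    also have "\<dots> \<le> 2 ^ (m - r) * 2 ^ ?e * 2 ^ length ys"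
      using card_rad_part_le[OF M less] card_left_ker_B by simp
    also have "\<dots> \<le> 2 ^ (m - n - 1)"
      unfolding power_add[symmetric] using len r_le_m n_le_r by (intro power_increasing) (auto simp: excess_def)
    finally have small: "card (?K \<inter> span_with radical ys) \<le> 2 ^ (m - n - 1)" .
    have "card (?A ys) + card (?K \<inter> span_with radical ys) = card ?K"
      using card_Diff_subset_Int[of ?K "span_with radical ys"] card_mono[OF fin_K, of "?K \<inter> span_with radical ys"] fin_K
      by auto
    moreover have "n < m"
      using less r_le_m n_le_r by (simp add: excess_def)
    then have "2 ^ (m - n) = 2 * (2::nat) ^ (m - n - 1)"
      by (cases "m - n") auto
    ultimately show ?thesis
      using small card_left_ker_ge[OF M_mats] by linarith
  qed
  have "(2 ^ (m - n - 1)) ^ (excess - ?e) \<le> card {xs. length xs = excess - ?e \<and> ?Q xs}"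
    by (rule card_lists_ge_power[where A = ?A]) (use bound fin_K in auto)
  then show ?thesis
    by (simp add: ker_flags_def)
qed

lemma card_flags_ge:
  assumes "M \<in> admissible_depth e"
  shows "(card (left_ker m B) * 2 ^ (e - 1)) ^ e * (2 ^ (m - n - 1)) ^ (excess - e)
    \<le> card (rad_flags M e \<times> ker_flags M (excess - e))"
proof -
  have M: "M \<in> admissible" "rad_depth M = e"
    using assms by (simp_all add: admissible_depth_def)
  show ?thesis
    unfolding card_cartesian_product
    using card_rad_flags_ge[OF M(1)] card_ker_flags_ge[OF M(1)] M(2) by (intro mult_le_mono) simp_all
qed

lemma card_mats_killing_lists:
  assumes T1: "T1 \<in> rad_lists e" and T2: "T2 \<in> iso_lists f" and "e + f = excess"
  shows "card (mats_killing (T2 @ T1)) = 2 ^ (n * n)" and "finite (mats_killing (T2 @ T1))"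
proof -
  have "span_with (left_ker m B) T1 \<subseteq> radical"
    by (rule span_with_least[OF is_subspace_radical left_ker_subset_radical]) (use T1 in \<open>simp add: rad_lists_def\<close>)
  then have "indep_mod (left_ker m B) (T2 @ T1)"
    using T1 T2 by (intro indep_mod_append) (auto simp: rad_lists_def iso_lists_def intro: indep_mod_antimono)
  moreover have "set (T2 @ T1) \<subseteq> vecs m"
    using T1 T2 radical_subset_vecs by (auto simp: rad_lists_def iso_lists_def)
  moreover have "length (T2 @ T1) = excess"
    using T1 T2 assms(3) by (simp add: rad_lists_def iso_lists_def)
  ultimately show "card (mats_killing (T2 @ T1)) = 2 ^ (n * n)" "finite (mats_killing (T2 @ T1))"
    using card_mats_killing by blast+
qed

text \<open>Double counting of the triples \<open>(M, T1, T2)\<close> with \<open>M\<close> of radical depth \<open>e\<close>, \<open>T1\<close> a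
  radical flag and \<open>T2\<close> a kernel flag of \<open>M\<close>: by \<open>flags_in_lists\<close> they embed into the triples
  \<open>(T1, T2, M)\<close> with \<open>M \<in> mats_killing (T2 @ T1)\<close>.\<close>

lemma card_admissible_depth_mult_le:
  assumes e: "e \<le> excess"
  shows "card (admissible_depth e) * ((card (left_ker m B) * 2 ^ (e - 1)) ^ e * (2 ^ (m - n - 1)) ^ (excess - e))
    \<le> card (rad_lists e) * card (iso_lists (excess - e)) * 2 ^ (n * n)"
proof -
  define f where "f = excess - e"
  define L where "L = (card (left_ker m B) * 2 ^ (e - 1)) ^ e * (2 ^ (m - n - 1)) ^ f"
  define X where "X = Sigma (admissible_depth e) (\<lambda>M. rad_flags M e \<times> ker_flags M f)"
  define Y where "Y = Sigma (rad_lists e \<times> iso_lists f) (\<lambda>(T1, T2). mats_killing (T2 @ T1))"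
  have ef: "e + f = excess"
    using e by (simp add: f_def)
  have fin_depth: "finite (admissible_depth e)"
    by (rule finite_subset[OF _ finite_admissible]) (auto simp: admissible_depth_def)
  have "card (admissible_depth e) * L = (\<Sum>M\<in>admissible_depth e. L)"
    by simp
  also have "\<dots> \<le> (\<Sum>M\<in>admissible_depth e. card (rad_flags M e \<times> ker_flags M f))"
    unfolding L_def f_def by (rule sum_mono) (rule card_flags_ge)
  also have "\<dots> = card X"
    unfolding X_def using fin_depth finite_rad_flags finite_ker_flags by (simp add: card_SigmaI)
  also have "card X \<le> card Y"
  proof (rule card_inj_on_le)
    show "inj_on (\<lambda>(M, T1, T2). ((T1, T2), M)) X"
      by (rule inj_onI) auto
    show "(\<lambda>(M, T1, T2). ((T1, T2), M)) ` X \<subseteq> Y"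
      using flags_in_lists by (fastforce simp: X_def Y_def admissible_depth_def)
    show "finite Y"
      unfolding Y_def using finite_rad_lists finite_iso_lists card_mats_killing_lists(2)[OF _ _ ef]
      by (intro finite_SigmaI) auto
  qed
  also have "card Y = (\<Sum>p\<in>rad_lists e \<times> iso_lists f. card (mats_killing (snd p @ fst p)))"
    unfolding Y_def using finite_rad_lists finite_iso_lists card_mats_killing_lists(2)[OF _ _ ef]
    by (simp add: card_SigmaI case_prod_beta)
  also have "\<dots> = (\<Sum>p\<in>rad_lists e \<times> iso_lists f. 2 ^ (n * n))"
    by (rule sum.cong) (auto simp: card_mats_killing_lists(1)[OF _ _ ef])
  also have "\<dots> = card (rad_lists e) * card (iso_lists f) * 2 ^ (n * n)"
    by (simp add: card_cartesian_product)
  finally show ?thesis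
    by (simp add: L_def f_def)
qed

lemma card_admissible_depth_pow_le:
  assumes e: "e \<le> excess"
  shows "card (admissible_depth e) * 2 ^ ((e - 1) * e + (m - n - 1) * (excess - e))
    \<le> 2 ^ ((2 * n - r) * e + (\<Sum>j<excess - e. m - j) + n * n)"
proof -
  let ?c = "card (left_ker m B)" and ?f = "excess - e"
  have "card (rad_lists e) \<le> (?c * 2 ^ (2 * n - r)) ^ e"
    using card_rad_lists_le[of e] power_mono[OF card_radical_le, of e] card_perp_row_space by simp
  moreover have "card (iso_lists ?f) \<le> 2 ^ (\<Sum>j<?f. m - j)"
    using card_iso_lists_le[of ?f] by (simp add: power_sum)
  ultimately have "card (admissible_depth e) * ((?c * 2 ^ (e - 1)) ^ e * (2 ^ (m - n - 1)) ^ ?f)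
      \<le> (?c * 2 ^ (2 * n - r)) ^ e * 2 ^ (\<Sum>j<?f. m - j) * 2 ^ (n * n)"
    using card_admissible_depth_mult_le[OF e] by (meson le_trans mult_le_mono order_refl)
  then have "?c ^ e * (card (admissible_depth e) * 2 ^ ((e - 1) * e + (m - n - 1) * ?f))
      \<le> ?c ^ e * 2 ^ ((2 * n - r) * e + (\<Sum>j<?f. m - j) + n * n)"
    by (simp add: power_mult_distrib power_mult[symmetric] power_add ac_simps)
  then show ?thesis
    using card_left_ker_B by simp
qed

lemma card_admissible_depth_le:
  assumes e: "e \<le> excess"
  shows "real (card (admissible_depth e)) \<le> 2 powr (real n * real r + 3 / 2 * real excess - (real excess)\<^sup>2 / 8)"
proof -
  define f where "f = excess - e"
  define A where "A = (e - 1) * e + (m - n - 1) * f"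
  define C where "C = (2 * n - r) * e + (\<Sum>j<f. m - j) + n * n"
  have "real (card (admissible_depth e) * 2 ^ A) \<le> real ((2::nat) ^ C)"
    using card_admissible_depth_pow_le[OF e] unfolding A_def C_def f_def by (simp only: of_nat_le_iff)
  then have "real (card (admissible_depth e)) * 2 powr real A \<le> 2 powr real C"
    by (simp add: powr_realpow)
  then have card_le: "real (card (admissible_depth e)) \<le> 2 powr (real C - real A)"
    by (simp add: powr_diff pos_le_divide_eq)
  have f_le: "f \<le> excess" and excess_le: "excess \<le> r"
    by (simp_all add: f_def excess_def)
  have r_eq: "real r = real n + real e + real f" and excess_eq: "real excess = real e + real f"
    using e n_le_r by (simp_all add: f_def excess_def of_nat_diff)
  have "real ((m - n - 1) * f) = (real m - real n - 1) * real f"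
    using f_le excess_le r_le_m n_le_r by (cases "f = 0") (auto simp: of_nat_diff excess_def)
  then have "real A = real e * real e - real e + (real m - real n - 1) * real f"
    unfolding A_def by (cases e) (simp_all add: algebra_simps)
  moreover have "real C = (2 * real n - real r) * real e + (real f * real m - real f * (real f - 1) / 2) + real n * real n"
    unfolding C_def using of_nat_sum_diff_lessThan[of f m] f_le excess_le r_le_m r_le_2n
    by (simp add: of_nat_diff)
  ultimately have "real C - real A \<le> real n * real r + 3 / 2 * real excess - (real excess)\<^sup>2 / 8"
    using flag_exponent_bound[of "real e" "real f" "real n" "real m"] unfolding r_eq excess_eq by simp
  then show ?thesis
    using card_le by (meson order_trans powr_mono one_le_numeral)
qed

lemma card_admissible_le:
  "real (card admissible) \<le> (real excess + 1) * 2 powr (real n * real r + 3 / 2 * real excess - (real excess)\<^sup>2 / 8)"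
proof -
  have "admissible \<subseteq> (\<Union>e\<le>excess. admissible_depth e)"
    using rad_depth_le_excess by (auto simp: admissible_depth_def)
  then have "card admissible \<le> card (\<Union>e\<le>excess. admissible_depth e)"
    by (rule card_mono[rotated]) (auto simp: admissible_depth_def intro: finite_subset[OF _ finite_admissible])
  also have "\<dots> \<le> (\<Sum>e\<le>excess. card (admissible_depth e))"
    by (rule card_UN_le) simp
  finally have "real (card admissible) \<le> (\<Sum>e\<le>excess. real (card (admissible_depth e)))"
    by (simp flip: of_nat_sum of_nat_le_iff)
  also have "\<dots> \<le> (\<Sum>e\<le>excess. 2 powr (real n * real r + 3 / 2 * real excess - (real excess)\<^sup>2 / 8))"
    by (rule sum_mono, rule card_admissible_depth_le) simp
  finally show ?thesis
    by (simp add: add.commute)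
qed

lemma log_card_products_le_excess:
  assumes "products \<noteq> {}"
  shows "log 2 (card products) \<le> real excess + 1 + (real n * real r + 3 / 2 * real excess - (real excess)\<^sup>2 / 8)"
proof -
  have "0 < card products"
    using assms finite_subset[OF products_subset_admissible finite_admissible] by (simp add: card_gt_0_iff)
  then have "log 2 (card products)
      \<le> log 2 ((real excess + 1) * 2 powr (real n * real r + 3 / 2 * real excess - (real excess)\<^sup>2 / 8))"
    using card_mono[OF finite_admissible products_subset_admissible] card_admissible_le
    by (intro log_mono) simp_all
  also have "\<dots> = log 2 (real excess + 1) + (real n * real r + 3 / 2 * real excess - (real excess)\<^sup>2 / 8)"
    by (simp add: log_mult)
  also have "log 2 (real excess + 1) \<le> real excess + 1"
    using log2_of_power_less[of "excess + 1" "excess + 1"] less_exp[of "excess + 1"] by (simp add: add.commute)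
  finally show ?thesis
    by simp
qed

end

context left_factor
begin

lemma log_card_products_le:
  fixes g d :: real
  assumes g: "0 < g" "96 \<le> g\<^sup>2 * n" and d: "0 \<le> d" "d \<le> g\<^sup>2 / 64" "d \<le> 1 / 2"
    and m: "(1 + g) * n \<le> (1 - d) * m" and nonempty: "products \<noteq> {}"
  shows "log 2 (card products) \<le> (1 - d) * m * n"
proof -
  obtain r where r: "card row_space = 2 ^ r" "r \<le> m" "r \<le> 2 * n"
    by (rule rank_exists) blast
  show ?thesis
  proof (cases "real r \<le> (1 - d) * m")
    case True
    have "real (card products) \<le> 2 powr (real r * real n)"
      using card_products_le[OF r(1)] by (simp add: powr_realpow flip: of_nat_mult of_nat_le_iff)
    then have "log 2 (card products) \<le> real r * real n"
      using nonempty finite_subset[OF products_subset_admissible finite_admissible]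
      by (simp add: log_le_iff card_gt_0_iff)
    also have "\<dots> \<le> (1 - d) * m * n"
      using True by (simp add: mult_right_mono)
    finally show ?thesis .
  next
    case False
    have "n \<noteq> 0"
      using g(2) by (cases "n = 0") simp_all
    then have n_ge_1: "1 \<le> real n"
      by simp
    have r_big: "(1 + g) * n < r"
      using False m by simp
    moreover have "real n \<le> (1 + g) * n"
      using g by (simp add: algebra_simps)
    ultimately have "n \<le> r"
      by simp
    then interpret left_factor_rank m n B r
      using r(1) by unfold_locales
    have "real excess = real r - real n"
      using n_le_r by (simp add: excess_def of_nat_diff)
    then have "real excess + 1 + (real n * real r + 3 / 2 * real excess - (real excess)\<^sup>2 / 8) \<le> (1 - d) * m * n"
      using high_rank_exponent_le[OF g(1) n_ge_1 g(2) d r_big] False r by simp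
    then show ?thesis
      using log_card_products_le_excess[OF nonempty] by linarith
  qed
qed

lemma entropy_products_le:
  fixes g d :: real
  assumes g: "0 < g" "96 \<le> g\<^sup>2 * n" and d: "0 \<le> d" "d \<le> g\<^sup>2 / 64" "d \<le> 1 / 2"
    and m: "(1 + g) * n \<le> (1 - d) * m"
  shows "entropy_uniform_image (iso_mats n) (matmul m (2 * n) n B) \<le> (1 - d) * m * n"
proof (cases "iso_mats n = {}")
  case True
  then show ?thesis
    using d by (simp add: entropy_uniform_image_def)
next
  case False
  have "entropy_uniform_image (iso_mats n) (matmul m (2 * n) n B) \<le> log 2 (card products)"
    unfolding products_def
    by (rule entropy_uniform_image_le_log_card[OF finite_subset[OF _ finite_mats] False]) (auto simp: iso_mats_def)
  also have "\<dots> \<le> (1 - d) * m * n"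
    using False by (intro log_card_products_le[OF g d m]) (simp add: products_def)
  finally show ?thesis .
qed

end

lemma saving_constants:
  fixes c :: real
  assumes "1 < c"
  obtains g d :: real where "0 < g" "0 < d" "d \<le> g\<^sup>2 / 64" "d \<le> 1 / 2" "1 + g \<le> (1 - d) * c"
proof
  define g where "g = (c - 1) / 2"
  define d where "d = min ((c - 1) / (2 * c)) (g\<^sup>2 / 64)"
  show "0 < g" "0 < d" "d \<le> g\<^sup>2 / 64"
    using assms by (simp_all add: g_def d_def)
  have "(c - 1) / (2 * c) \<le> 1 / 2"
    using assms by (simp add: field_simps)
  then show "d \<le> 1 / 2"
    using min.cobounded1[of "(c - 1) / (2 * c)" "g\<^sup>2 / 64"] unfolding d_def by linarith
  have "d \<le> (c - 1) / (2 * c)"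
    by (simp add: d_def)
  then have "d * c \<le> (c - 1) / 2"
    using assms by (simp add: field_simps)
  moreover have "(1 - d) * c = c - d * c"
    by (simp add: algebra_simps)
  ultimately show "1 + g \<le> (1 - d) * c"
    unfolding g_def by argo
qed

theorem theoremD1:
  fixes c :: real
  assumes "c > 1"
  shows "\<exists>d::real. d > 0 \<and> (\<exists>N::nat. \<forall>n\<ge>N. \<forall>m::nat. real m \<ge> c * real n \<longrightarrow>
           (\<forall>B\<in>mats m (2*n).
              entropy_uniform_image (iso_mats n) (matmul m (2*n) n B)
                \<le> (1 - d) * real m * real n))"
proof -
  obtain g d :: real where g: "0 < g" and d: "0 < d" "d \<le> g\<^sup>2 / 64" "d \<le> 1 / 2" and dc: "1 + g \<le> (1 - d) * c"
    using saving_constants[OF assms] by blast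
  have "entropy_uniform_image (iso_mats n) (matmul m (2 * n) n B) \<le> (1 - d) * m * n"
    if n: "nat \<lceil>96 / g\<^sup>2\<rceil> \<le> n" and m: "c * n \<le> m" and B: "B \<in> mats m (2 * n)" for n m B
  proof -
    interpret left_factor m n B
      using B by unfold_locales
    have "96 / g\<^sup>2 \<le> n"
      using real_nat_ceiling_ge[of "96 / g\<^sup>2"] n by linarith
    then have gn: "96 \<le> g\<^sup>2 * n"
      using g by (simp add: pos_divide_le_eq mult.commute)
    have "(1 + g) * n \<le> (1 - d) * c * n"
      using dc by (simp add: mult_right_mono)
    also have "\<dots> \<le> (1 - d) * m"
      using m d by (simp add: mult.assoc mult_left_mono)
    finally show ?thesis
      using entropy_products_le[OF g gn _ d(2,3)] d(1) by simp
  qed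
  then show ?thesis
    using d(1) by (intro exI[of _ d] conjI exI[of _ "nat \<lceil>96 / g\<^sup>2\<rceil>"]) auto
qed

end
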